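(* Let $\Theta$ be a quantum superchannel from $\mathrm{CPTP}(A\to B)$ to $\mathrm{CPTP}(A'\to B)$ written in standard form $\Theta[\mathcal{N}]=\mathcal{E}^{RB\to B}\circ\mathcal{N}^{A\to B}\circ\mathcal{V}^{A'\to RA}$. The following are equivalent: (1) $\Theta$ is completely uniformity-preserving; (2) the channel $\Theta\otimes\mathbb{1}^{(\mathbb{C}\to C)}\big[\mathbf{u}^B\otimes\mathrm{id}^{A\to C}\big]\in\mathrm{CPTP}(A'\to BC)$, where $C$ is a replica of $A$ and $\mathbf{u}^B\otimes\mathrm{id}^{A\to C}$ is the channel $\rho^A\mapsto\mathbf{u}^B\otimes\rho^C$, is marginally uniform with respect to $B$; (3) $\Theta$ is a mixing superchannel, i.e. $\mathcal{E}^{RB\to B}$ is conditionally unital.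
   Context: Systems are finite-dimensional; $\mathrm{CPTP}(A\to B)$ is the set of quantum channels; $\mathbf{u}^B=I^B/|B|$. Every superchannel can be realized as $\Theta[\mathcal{N}]=\mathcal{E}^{RB\to B}\circ\mathcal{N}^{A\to B}\circ\mathcal{V}^{A'\to RA}$ with an auxiliary system $R$, an isometry channel $\mathcal{V}$ and a channel $\mathcal{E}$ (identity on systems not acted upon); it is in standard form if $|R|$ is the minimal possible dimension among such realizations. For systems $C_0,C_1$, $\Theta\otimes\mathbb{1}^{(C_0\to C_1)}$ acts on $\mathcal{N}^{AC_0\to BC_1}$ by $\mathcal{E}^{RB\to B}\circ\mathcal{N}^{AC_0\to BC_1}\circ\mathcal{V}^{A'\to RA}$. A channel $\mathcal{N}\in\mathrm{CPTP}(AC_0\to BC_1)$ is marginally uniform with respect to $B$ if $\mathcal{N}=\mathbf{u}^B\otimes\mathcal{N}^{AC_0\to C_1}$ where $\mathcal{N}^{AC_0\to C_1}=\mathrm{Tr}_B\circ\mathcal{N}$. $\Theta$ is completely uniformity-preserving if for all systems $C_0,C_1$ and every marginally uniform $\mathcal{N}^{AC_0\to BC_1}$, $\Theta\otimes\mathbb{1}^{(C_0\to C_1)}[\mathcal{N}]$ is marginally uniform with respect to $B$. A channel $\mathcal{E}\in\mathrm{CPTP}(RB\to B)$ is conditionally unital if for every density matrix $\tau^R$ the channel $\omega^B\mapsto\mathcal{E}(\tau^R\otimes\omega^B)$ is unital, i.e. $\mathcal{E}(\tau^R\otimes\mathbf{u}^B)=\mathbf{u}^B$. *)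

theory Defs
  imports "Jordan_Normal_Form.Matrix" Complex_Main
begin

text \<open>Composite systems X Y are modelled by the Kronecker
  product with the first-named factor as the most significant index.\<close>

definition kron :: "complex mat \<Rightarrow> complex mat \<Rightarrow> complex mat" where
  "kron A B = mat (dim_row A * dim_row B) (dim_col A * dim_col B)
     (\<lambda>(i,j). A $$ (i div dim_row B, j div dim_col B) * B $$ (i mod dim_row B, j mod dim_col B))"

definition adj :: "complex mat \<Rightarrow> complex mat" where
  "adj M = mat (dim_col M) (dim_row M) (\<lambda>(i,j). cnj (M $$ (j,i)))"

definition mtrace :: "complex mat \<Rightarrow> complex" where
  "mtrace X = (\<Sum>i<dim_row X. X $$ (i,i))"

definition psd :: "nat \<Rightarrow> complex mat \<Rightarrow> bool" where
  "psd d X \<longleftrightarrow> X \<in> carrier_mat d d \<and>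
     (\<forall>v \<in> carrier_vec d. let q = (\<Sum>i<d. \<Sum>j<d. cnj (v $ i) * X $$ (i,j) * v $ j)
                         in Im q = 0 \<and> 0 \<le> Re q)"

definition density :: "nat \<Rightarrow> complex mat \<Rightarrow> bool" where
  "density d X \<longleftrightarrow> psd d X \<and> mtrace X = 1"

definition unif :: "nat \<Rightarrow> complex mat" where
  "unif d = (1 / of_nat d) \<cdot>\<^sub>m 1\<^sub>m d"

definition ptrace_first :: "nat \<Rightarrow> nat \<Rightarrow> complex mat \<Rightarrow> complex mat" where
  "ptrace_first dB dC X = mat dC dC (\<lambda>(i,j). \<Sum>k<dB. X $$ (k*dC + i, k*dC + j))"

text \<open>id_n \<otimes> \<Phi>, the ancilla (dimension n) being the first factor; \<Phi> : dIn \<rightarrow> dOut.\<close>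
definition id_tensor :: "nat \<Rightarrow> nat \<Rightarrow> nat \<Rightarrow> (complex mat \<Rightarrow> complex mat) \<Rightarrow> complex mat \<Rightarrow> complex mat" where
  "id_tensor n dIn dOut \<Phi> X = mat (n*dOut) (n*dOut) (\<lambda>(r,s).
      \<Phi> (mat dIn dIn (\<lambda>(i,j). X $$ ((r div dOut)*dIn + i, (s div dOut)*dIn + j))) $$ (r mod dOut, s mod dOut))"

text \<open>\<Phi> \<otimes> id_dC, the untouched system (dimension dC) being the last factor.\<close>
definition tensor_id :: "nat \<Rightarrow> nat \<Rightarrow> (complex mat \<Rightarrow> complex mat) \<Rightarrow> nat \<Rightarrow> complex mat \<Rightarrow> complex mat" where
  "tensor_id dIn dOut \<Phi> dC X = mat (dOut*dC) (dOut*dC) (\<lambda>(r,s).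
      \<Phi> (mat dIn dIn (\<lambda>(i,j). X $$ (i*dC + r mod dC, j*dC + s mod dC))) $$ (r div dC, s div dC))"

text \<open>Quantum channels CPTP(dIn \<rightarrow> dOut): linear, completely positive, trace preserving
  maps (only their action on dIn x dIn matrices is relevant).\<close>
definition CPTP :: "nat \<Rightarrow> nat \<Rightarrow> (complex mat \<Rightarrow> complex mat) \<Rightarrow> bool" where
  "CPTP dIn dOut \<Phi> \<longleftrightarrow>
     (\<forall>X \<in> carrier_mat dIn dIn. \<Phi> X \<in> carrier_mat dOut dOut) \<and>
     (\<forall>X \<in> carrier_mat dIn dIn. \<forall>Y \<in> carrier_mat dIn dIn. \<Phi> (X + Y) = \<Phi> X + \<Phi> Y) \<and>
     (\<forall>X \<in> carrier_mat dIn dIn. \<forall>c::complex. \<Phi> (c \<cdot>\<^sub>m X) = c \<cdot>\<^sub>m \<Phi> X) \<and>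
     (\<forall>X \<in> carrier_mat dIn dIn. mtrace (\<Phi> X) = mtrace X) \<and>
     (\<forall>n>0. \<forall>X. psd (n*dIn) X \<longrightarrow> psd (n*dOut) (id_tensor n dIn dOut \<Phi> X))"

definition isometry :: "nat \<Rightarrow> nat \<Rightarrow> complex mat \<Rightarrow> bool" where
  "isometry dIn dOut V \<longleftrightarrow> V \<in> carrier_mat dOut dIn \<and> adj V * V = 1\<^sub>m dIn"

text \<open>The superchannel realized by (dR, V, E), with V : A' \<rightarrow> R A and E : R B \<rightarrow> B,
  tensored with the identity supermap 1^(C0 \<rightarrow> C1) and applied to N : A C0 \<rightarrow> B C1:
  (E \<otimes> id_C1) \<circ> (id_R \<otimes> N) \<circ> (V \<otimes> id_C0).\<close>
definition superch_ext ::
  "nat \<Rightarrow> nat \<Rightarrow> nat \<Rightarrow> nat \<Rightarrow> complex mat \<Rightarrow> (complex mat \<Rightarrow> complex mat) \<Rightarrow> nat \<Rightarrow> nat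
     \<Rightarrow> (complex mat \<Rightarrow> complex mat) \<Rightarrow> complex mat \<Rightarrow> complex mat" where
  "superch_ext dA' dA dB dR V E dC0 dC1 N X =
     tensor_id (dR*dB) dB E dC1
       (id_tensor dR (dA*dC0) (dB*dC1) N
          (tensor_id dA' (dR*dA) (\<lambda>Y. V * Y * adj V) dC0 X))"

definition superch ::
  "nat \<Rightarrow> nat \<Rightarrow> nat \<Rightarrow> complex mat \<Rightarrow> (complex mat \<Rightarrow> complex mat)
     \<Rightarrow> (complex mat \<Rightarrow> complex mat) \<Rightarrow> complex mat \<Rightarrow> complex mat" where
  "superch dA dB dR V E N X = E (id_tensor dR dA dB N (V * X * adj V))"

definition realization :: "nat \<Rightarrow> nat \<Rightarrow> nat \<Rightarrow> nat \<Rightarrow> complex mat \<Rightarrow> (complex mat \<Rightarrow> complex mat) \<Rightarrow> bool" where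
  "realization dA' dA dB dR V E \<longleftrightarrow> 0 < dR \<and> isometry dA' (dR*dA) V \<and> CPTP (dR*dB) dB E"

text \<open>Standard form: dR is minimal among all realizations of the same superchannel.\<close>
definition standard_form :: "nat \<Rightarrow> nat \<Rightarrow> nat \<Rightarrow> nat \<Rightarrow> complex mat \<Rightarrow> (complex mat \<Rightarrow> complex mat) \<Rightarrow> bool" where
  "standard_form dA' dA dB dR V E \<longleftrightarrow> realization dA' dA dB dR V E \<and>
     (\<forall>dR' V' E'. realization dA' dA dB dR' V' E' \<and>
        (\<forall>N. CPTP dA dB N \<longrightarrow> (\<forall>X \<in> carrier_mat dA' dA'.
             superch dA dB dR' V' E' N X = superch dA dB dR V E N X))
        \<longrightarrow> dR \<le> dR')"

definition marg_uniform :: "nat \<Rightarrow> nat \<Rightarrow> nat \<Rightarrow> (complex mat \<Rightarrow> complex mat) \<Rightarrow> bool" where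
  "marg_uniform dIn dB dC N \<longleftrightarrow>
     (\<forall>X \<in> carrier_mat dIn dIn. N X = kron (unif dB) (ptrace_first dB dC (N X)))"

definition compl_unif_preserving ::
  "nat \<Rightarrow> nat \<Rightarrow> nat \<Rightarrow> nat \<Rightarrow> complex mat \<Rightarrow> (complex mat \<Rightarrow> complex mat) \<Rightarrow> bool" where
  "compl_unif_preserving dA' dA dB dR V E \<longleftrightarrow>
     (\<forall>dC0 dC1 N. 0 < dC0 \<and> 0 < dC1 \<and> CPTP (dA*dC0) (dB*dC1) N \<and> marg_uniform (dA*dC0) dB dC1 N
        \<longrightarrow> marg_uniform (dA'*dC0) dB dC1 (superch_ext dA' dA dB dR V E dC0 dC1 N))"

definition cond_unital :: "nat \<Rightarrow> nat \<Rightarrow> (complex mat \<Rightarrow> complex mat) \<Rightarrow> bool" where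
  "cond_unital dR dB E \<longleftrightarrow> (\<forall>\<tau>. density dR \<tau> \<longrightarrow> E (kron \<tau> (unif dB)) = unif dB)"

end

theory Submission
  imports Defs "Jordan_Normal_Form.Determinant"
begin

text \<open>
  (1) \<Longrightarrow> (2): the channel u \<otimes> id is itself marginally uniform.

  (3) \<Longrightarrow> (1): by polarization every operator is a combination of rank-one positive ones, so
  conditional unitality extends linearly to E(\<tau> \<otimes> u) = Tr(\<tau>) u for every operator \<tau> on R.
  If N is marginally uniform, each C1-block of the input of E has the form \<tau>(c,c') \<otimes> u, so the
  output is u \<otimes> (something on C1).

  (2) \<Longrightarrow> (3): condition (2) says E(\<tau> \<otimes> u) = Tr(\<tau>) u whenever \<tau> = \<langle>c| V X V* |c'\<rangle> is an
  A-block of an output of V.  These operators span all \<tau> = K \<beta> K*, where K is V reshaped into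
  an R \<times> (A A') matrix, so that K K* = Tr_A(V V*).  If K K* is invertible this is every \<tau>.
  Otherwise a kernel vector z of K K* is orthogonal to the R-part of V; compressing R onto the
  orthogonal complement of z by an isometry W (a Householder reflection with one column dropped)
  yields a realization of the same superchannel with |R| - 1, contradicting the standard form.
\<close>

section \<open>Block indices and finite sums\<close>

lemma sum_lessThan_mult:
  fixes f :: "nat \<Rightarrow> 'a::comm_monoid_add"
  shows "(\<Sum>r<a*b. f r) = (\<Sum>i<a. \<Sum>j<b. f (i*b + j))"
proof -
  have "(\<Sum>r<a*b. f r) = (\<Sum>i<a. sum f {i*b..<i*b+b})"
    using sum.nat_group[of f b a] by simp
  also have "\<dots> = (\<Sum>i<a. \<Sum>j<b. f (i*b + j))"
  proof (rule sum.cong[OF refl])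
    fix i
    have "sum f {i*b..<i*b+b} = sum f {0+i*b..<b+i*b}" by (simp add: add.commute)
    also have "\<dots> = (\<Sum>j=0..<b. f (j + i*b))" by (rule sum.shift_bounds_nat_ivl)
    finally show "sum f {i*b..<i*b+b} = (\<Sum>j<b. f (i*b + j))" by (simp add: lessThan_atLeast0 add.commute)
  qed
  finally show ?thesis .
qed

lemma block_index_less: fixes R n i d :: nat shows "R < n \<Longrightarrow> i < d \<Longrightarrow> R*d + i < n*d"
proof -
  assume "R < n" "i < d"
  hence "R*d + i < (R+1)*d" by simp
  also have "\<dots> \<le> n*d" using \<open>R < n\<close> by (intro mult_le_mono1) simp
  finally show ?thesis .
qed

lemma mod_less_of_less_mult: fixes r n d :: nat shows "r < n*d \<Longrightarrow> r mod d < d"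
  by (cases d) auto

lemma block_index_div: fixes i c d b :: nat shows "c < d \<Longrightarrow> (i*d + c) div (b*d) = i div b"
  by (simp add: div_mult2_eq mult.commute[of b d])

lemma block_index_mod: fixes i c d b :: nat shows "c < d \<Longrightarrow> (i*d + c) mod (b*d) = (i mod b)*d + c"
proof -
  assume c: "c < d"
  have "(i*d+c) mod (d*b) = d * ((i*d+c) div d mod b) + (i*d+c) mod d" by (simp add: mod_mult2_eq)
  with c show ?thesis by (simp add: mult.commute)
qed

lemma sum_swap_pairs:
  "(\<Sum>r\<in>R. \<Sum>s\<in>S. \<Sum>t\<in>T. \<Sum>u\<in>U. f r s t u) = (\<Sum>t\<in>T. \<Sum>u\<in>U. \<Sum>r\<in>R. \<Sum>s\<in>S. f r s t u)"
proof -
  have "(\<Sum>r\<in>R. \<Sum>s\<in>S. \<Sum>t\<in>T. \<Sum>u\<in>U. f r s t u) = (\<Sum>r\<in>R. \<Sum>t\<in>T. \<Sum>u\<in>U. \<Sum>s\<in>S. f r s t u)"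
    by (rule sum.cong[OF refl], subst sum.swap, rule sum.cong[OF refl], rule sum.swap)
  also have "\<dots> = (\<Sum>t\<in>T. \<Sum>u\<in>U. \<Sum>r\<in>R. \<Sum>s\<in>S. f r s t u)"
    by (subst sum.swap, rule sum.cong[OF refl], rule sum.swap)
  finally show ?thesis .
qed

lemma sum_block_indicator:
  fixes h :: "nat \<Rightarrow> 'a::comm_monoid_add"
  assumes "R < n"
  shows "(\<Sum>t<n*d. if t div d = R then h t else 0) = (\<Sum>k<d. h (R*d + k))"
proof -
  have "(\<Sum>t<n*d. if t div d = R then h t else 0) = (\<Sum>m<n. \<Sum>k<d. if (m*d+k) div d = R then h (m*d+k) else 0)"
    by (rule sum_lessThan_mult)
  also have "\<dots> = (\<Sum>m<n. if m = R then (\<Sum>k<d. h (m*d+k)) else 0)"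
    by (rule sum.cong[OF refl]) auto
  finally show ?thesis using assms by simp
qed

lemma sum_sum_delta:
  fixes t :: "nat \<Rightarrow> nat \<Rightarrow> complex"
  assumes "i < n" "j < n"
  shows "(\<Sum>a<n. \<Sum>b<n. t a b * (if i = a \<and> j = b then 1 else 0)) = t i j"
proof -
  have "(\<Sum>b<n. t a b * (if i = a \<and> j = b then 1 else 0)) = (if a = i then t a j else 0)" for a
    using assms by (cases "a = i") (simp_all add: if_distrib cong: if_cong)
  thus ?thesis using assms by simp
qed

lemma sum_cnj_mult_self_eq_0_iff:
  fixes v :: "nat \<Rightarrow> complex"
  shows "(\<Sum>i<n. v i * cnj (v i)) = 0 \<longleftrightarrow> (\<forall>i<n. v i = 0)"
proof -
  have "(\<Sum>i<n. v i * cnj (v i)) = of_real (\<Sum>i<n. (cmod (v i))\<^sup>2)"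
    by (simp only: of_real_sum complex_norm_square)
  moreover have "(\<Sum>i<n. (cmod (v i))\<^sup>2) = 0 \<longleftrightarrow> (\<forall>i<n. v i = 0)"
    by (subst sum_nonneg_eq_0_iff) auto
  ultimately show ?thesis by (simp only: of_real_eq_0_iff)
qed

section \<open>Matrix bookkeeping\<close>

lemma unif_carrier[simp]: "unif d \<in> carrier_mat d d" "dim_row (unif d) = d" "dim_col (unif d) = d"
  by (simp_all add: unif_def)

lemma unif_entry: "i < d \<Longrightarrow> j < d \<Longrightarrow> unif d $$ (i,j) = (if i = j then 1 / of_nat d else 0)"
  by (simp add: unif_def)

lemma mtrace_unif: "0 < d \<Longrightarrow> mtrace (unif d) = 1"
  by (simp add: mtrace_def unif_def)

lemma kron_dim[simp]: "dim_row (kron A B) = dim_row A * dim_row B" "dim_col (kron A B) = dim_col A * dim_col B"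
  by (simp_all add: kron_def)

lemma kron_carrier: "A \<in> carrier_mat n n' \<Longrightarrow> B \<in> carrier_mat m m' \<Longrightarrow> kron A B \<in> carrier_mat (n*m) (n'*m')"
  by (simp add: kron_def)

lemma kron_index: "A \<in> carrier_mat n n' \<Longrightarrow> B \<in> carrier_mat m m' \<Longrightarrow> i < n*m \<Longrightarrow> j < n'*m' \<Longrightarrow>
  kron A B $$ (i,j) = A $$ (i div m, j div m') * B $$ (i mod m, j mod m')"
  by (simp add: kron_def)

lemma kron_add_left: "X \<in> carrier_mat n n \<Longrightarrow> Y \<in> carrier_mat n n \<Longrightarrow> B \<in> carrier_mat m m \<Longrightarrow>
  kron (X + Y) B = kron X B + kron Y B"
  by (intro eq_matI) (auto simp: kron_def algebra_simps less_mult_imp_div_less)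

lemma kron_smult_left: "X \<in> carrier_mat n n \<Longrightarrow> B \<in> carrier_mat m m \<Longrightarrow> kron (c \<cdot>\<^sub>m X) B = c \<cdot>\<^sub>m kron X B"
  by (intro eq_matI) (auto simp: kron_def algebra_simps less_mult_imp_div_less)

lemma kron_add_right: "X \<in> carrier_mat n n \<Longrightarrow> Y \<in> carrier_mat n n \<Longrightarrow> B \<in> carrier_mat m m \<Longrightarrow>
  kron B (X + Y) = kron B X + kron B Y"
  by (intro eq_matI) (auto simp: kron_def algebra_simps less_mult_imp_div_less mod_less_of_less_mult)

lemma kron_smult_right: "X \<in> carrier_mat n n \<Longrightarrow> B \<in> carrier_mat m m \<Longrightarrow> kron B (c \<cdot>\<^sub>m X) = c \<cdot>\<^sub>m kron B X"
  by (intro eq_matI) (auto simp: kron_def algebra_simps less_mult_imp_div_less mod_less_of_less_mult)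

lemma mtrace_kron:
  assumes A: "A \<in> carrier_mat n n" and B: "B \<in> carrier_mat m m"
  shows "mtrace (kron A B) = mtrace A * mtrace B"
proof -
  have "mtrace (kron A B) = (\<Sum>a<n. \<Sum>b<m. kron A B $$ (a*m+b, a*m+b))"
    unfolding mtrace_def using A B by (simp add: sum_lessThan_mult)
  also have "\<dots> = (\<Sum>a<n. \<Sum>b<m. A $$ (a,a) * B $$ (b,b))"
    using A B block_index_less by (intro sum.cong refl) (simp add: kron_index)
  also have "\<dots> = mtrace A * mtrace B" unfolding mtrace_def using A B by (simp add: sum_product)
  finally show ?thesis .
qed

lemma ptrace_carrier[simp]: "ptrace_first dB dC X \<in> carrier_mat dC dC"
  "dim_row (ptrace_first dB dC X) = dC" "dim_col (ptrace_first dB dC X) = dC"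
  by (simp_all add: ptrace_first_def)

lemma ptrace_index: "i < dC \<Longrightarrow> j < dC \<Longrightarrow> ptrace_first dB dC X $$ (i,j) = (\<Sum>k<dB. X $$ (k*dC + i, k*dC + j))"
  by (simp add: ptrace_first_def)

lemma ptrace_kron_unif:
  assumes dB: "0 < dB" and X: "X \<in> carrier_mat dA dA"
  shows "ptrace_first dB dA (kron (unif dB) X) = X"
proof (rule eq_matI)
  fix i j assume "i < dim_row X" "j < dim_col X"
  hence i: "i < dA" and j: "j < dA" using X by auto
  have "ptrace_first dB dA (kron (unif dB) X) $$ (i,j) = (\<Sum>k<dB. kron (unif dB) X $$ (k*dA + i, k*dA + j))"
    using i j by (simp add: ptrace_index)
  also have "\<dots> = (\<Sum>k<dB. (1 / of_nat dB) * X $$ (i,j))"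
    using i j block_index_less by (intro sum.cong refl) (simp add: kron_index[OF unif_carrier(1) X] unif_entry)
  also have "\<dots> = X $$ (i,j)" using dB by simp
  finally show "ptrace_first dB dA (kron (unif dB) X) $$ (i,j) = X $$ (i,j)" .
qed (use X in auto)

lemma tensor_id_dim[simp]: "dim_row (tensor_id dIn dOut \<Phi> dC X) = dOut*dC" "dim_col (tensor_id dIn dOut \<Phi> dC X) = dOut*dC"
  "tensor_id dIn dOut \<Phi> dC X \<in> carrier_mat (dOut*dC) (dOut*dC)"
  by (simp_all add: tensor_id_def)

lemma tensor_id_index: "r < dOut*dC \<Longrightarrow> s < dOut*dC \<Longrightarrow> tensor_id dIn dOut \<Phi> dC X $$ (r,s) =
   \<Phi> (mat dIn dIn (\<lambda>(i,j). X $$ (i*dC + r mod dC, j*dC + s mod dC))) $$ (r div dC, s div dC)"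
  by (simp add: tensor_id_def)

lemma id_tensor_dim[simp]: "dim_row (id_tensor n dIn dOut \<Phi> X) = n*dOut" "dim_col (id_tensor n dIn dOut \<Phi> X) = n*dOut"
  "id_tensor n dIn dOut \<Phi> X \<in> carrier_mat (n*dOut) (n*dOut)"
  by (simp_all add: id_tensor_def)

lemma id_tensor_index: "r < n*dOut \<Longrightarrow> s < n*dOut \<Longrightarrow> id_tensor n dIn dOut \<Phi> X $$ (r,s) =
  \<Phi> (mat dIn dIn (\<lambda>(i,j). X $$ ((r div dOut)*dIn + i, (s div dOut)*dIn + j))) $$ (r mod dOut, s mod dOut)"
  by (simp add: id_tensor_def)

lemma id_tensor_index_split_output:
  assumes i: "i < n*dB" and j: "j < n*dB" and c: "c < dC" and c': "c' < dC"
  shows "id_tensor n dIn (dB*dC) N T $$ (i*dC + c, j*dC + c') =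
     N (mat dIn dIn (\<lambda>(k,l). T $$ ((i div dB)*dIn + k, (j div dB)*dIn + l))) $$ ((i mod dB)*dC + c, (j mod dB)*dC + c')"
proof -
  have "i*dC + c < n*(dB*dC)" "j*dC + c' < n*(dB*dC)"
    using block_index_less[OF i c] block_index_less[OF j c'] by (simp_all add: mult.assoc)
  thus ?thesis using c c' by (simp add: id_tensor_index block_index_div block_index_mod)
qed

lemma id_tensor_comp:
  assumes \<Phi>: "\<forall>Y\<in>carrier_mat dIn dIn. \<Phi> Y \<in> carrier_mat dMid dMid"
  shows "id_tensor n dIn dOut (\<lambda>Y. E (\<Phi> Y)) X = id_tensor n dMid dOut E (id_tensor n dIn dMid \<Phi> X)"
proof (rule eq_matI)
  fix r s assume "r < dim_row (id_tensor n dMid dOut E (id_tensor n dIn dMid \<Phi> X))"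
    "s < dim_col (id_tensor n dMid dOut E (id_tensor n dIn dMid \<Phi> X))"
  hence r: "r < n*dOut" and s: "s < n*dOut" by auto
  have R: "r div dOut < n" and S: "s div dOut < n" using r s by (simp_all add: less_mult_imp_div_less)
  let ?B = "mat dIn dIn (\<lambda>(i,j). X $$ ((r div dOut)*dIn + i, (s div dOut)*dIn + j))"
  have PB: "\<Phi> ?B \<in> carrier_mat dMid dMid" using \<Phi> by simp
  have "mat dMid dMid (\<lambda>(i,j). id_tensor n dIn dMid \<Phi> X $$ ((r div dOut)*dMid + i, (s div dOut)*dMid + j)) = \<Phi> ?B"
    using PB block_index_less[OF R] block_index_less[OF S] by (intro eq_matI) (auto simp: id_tensor_index)
  thus "id_tensor n dIn dOut (\<lambda>Y. E (\<Phi> Y)) X $$ (r,s) = id_tensor n dMid dOut E (id_tensor n dIn dMid \<Phi> X) $$ (r,s)"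
    unfolding id_tensor_index[OF r s] by simp
qed auto

lemma superch_ext_dim[simp]: "dim_row (superch_ext dA' dA dB dR V E dC0 dC1 N X) = dB*dC1"
  "dim_col (superch_ext dA' dA dB dR V E dC0 dC1 N X) = dB*dC1"
  by (simp_all add: superch_ext_def)

lemma mult_entry: "A \<in> carrier_mat n m \<Longrightarrow> B \<in> carrier_mat m k \<Longrightarrow> i < n \<Longrightarrow> j < k \<Longrightarrow>
  (A * B) $$ (i,j) = (\<Sum>l<m. A $$ (i,l) * B $$ (l,j))"
  by (simp add: scalar_prod_def lessThan_atLeast0)

lemma adj_carrier: "A \<in> carrier_mat n m \<Longrightarrow> adj A \<in> carrier_mat m n"
  by (simp add: adj_def)

lemma adj_entry: "A \<in> carrier_mat n m \<Longrightarrow> i < m \<Longrightarrow> j < n \<Longrightarrow> adj A $$ (i,j) = cnj (A $$ (j,i))"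
  by (simp add: adj_def)

lemma adj_dim[simp]: "dim_row (adj A) = dim_col A" "dim_col (adj A) = dim_row A"
  by (simp_all add: adj_def)

lemma adj_adj: "adj (adj A) = A"
  by (intro eq_matI) (auto simp: adj_def)

lemma adj_mult:
  assumes A: "A \<in> carrier_mat n m" and B: "B \<in> carrier_mat m k"
  shows "adj (A * B) = adj B * adj A"
proof (rule eq_matI)
  fix i j assume "i < dim_row (adj B * adj A)" "j < dim_col (adj B * adj A)"
  hence i: "i < k" and j: "j < n" using A B by auto
  have AB: "A * B \<in> carrier_mat n k" using A B by simp
  have "adj (A * B) $$ (i,j) = cnj (\<Sum>l<m. A $$ (j,l) * B $$ (l,i))"
    by (simp add: adj_entry[OF AB i j] mult_entry[OF A B j i] del: index_mult_mat)
  also have "\<dots> = (\<Sum>l<m. adj B $$ (i,l) * adj A $$ (l,j))"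
    using A B i j by (simp add: cnj_sum adj_entry mult.commute)
  also have "\<dots> = (adj B * adj A) $$ (i,j)"
    by (rule mult_entry[OF adj_carrier[OF B] adj_carrier[OF A] i j, symmetric])
  finally show "adj (A * B) $$ (i,j) = (adj B * adj A) $$ (i,j)" .
qed (use A B in auto)

lemma congruence_entry:
  assumes J: "J \<in> carrier_mat m n" and Y: "Y \<in> carrier_mat n n" and p: "p < m" and q: "q < m"
  shows "(J * Y * adj J) $$ (p,q) = (\<Sum>k<n. \<Sum>l<n. J $$ (p,k) * Y $$ (k,l) * cnj (J $$ (q,l)))"
proof -
  have JY: "J * Y \<in> carrier_mat m n" using J Y by simp
  have "(J * Y * adj J) $$ (p,q) = (\<Sum>l<n. (J * Y) $$ (p,l) * adj J $$ (l,q))"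
    by (rule mult_entry[OF JY adj_carrier[OF J] p q])
  also have "\<dots> = (\<Sum>l<n. (\<Sum>k<n. J $$ (p,k) * Y $$ (k,l)) * cnj (J $$ (q,l)))"
    using J Y p q by (intro sum.cong refl) (simp add: mult_entry[OF J Y] adj_entry[OF J] del: index_mult_mat)
  also have "\<dots> = (\<Sum>k<n. \<Sum>l<n. J $$ (p,k) * Y $$ (k,l) * cnj (J $$ (q,l)))"
    by (simp add: sum_distrib_right, rule sum.swap)
  finally show ?thesis .
qed

lemma mtrace_isometry_congruence:
  assumes J: "J \<in> carrier_mat m n" and iso: "adj J * J = 1\<^sub>m n" and Y: "Y \<in> carrier_mat n n"
  shows "mtrace (J * Y * adj J) = mtrace Y"
proof -
  have "mtrace (J * Y * adj J) = (\<Sum>p<m. \<Sum>k<n. \<Sum>l<n. J $$ (p,k) * Y $$ (k,l) * cnj (J $$ (p,l)))"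
  proof -
    have "dim_row (J * Y * adj J) = m" using J by simp
    thus ?thesis unfolding mtrace_def by (intro sum.cong refl congruence_entry[OF J Y]) auto
  qed
  also have "\<dots> = (\<Sum>k<n. \<Sum>l<n. \<Sum>p<m. J $$ (p,k) * Y $$ (k,l) * cnj (J $$ (p,l)))"
    by (subst sum.swap, rule sum.cong[OF refl], rule sum.swap)
  also have "\<dots> = (\<Sum>k<n. \<Sum>l<n. Y $$ (k,l) * (adj J * J) $$ (l,k))"
  proof (intro sum.cong refl)
    fix k l assume k: "k \<in> {..<n}" and l: "l \<in> {..<n}"
    have "(adj J * J) $$ (l,k) = (\<Sum>p<m. cnj (J $$ (p,l)) * J $$ (p,k))"
      using J k l by (simp add: mult_entry[OF adj_carrier[OF J] J] adj_entry del: index_mult_mat)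
    thus "(\<Sum>p<m. J $$ (p,k) * Y $$ (k,l) * cnj (J $$ (p,l))) = Y $$ (k,l) * (adj J * J) $$ (l,k)"
      by (simp add: sum_distrib_left mult.commute mult.left_commute)
  qed
  also have "\<dots> = mtrace Y" unfolding iso mtrace_def using Y by (simp add: if_distrib cong: if_cong)
  finally show ?thesis .
qed

lemma kron_one_mult_entry:
  assumes W: "W \<in> carrier_mat n m" and Z: "Z \<in> carrier_mat (m*d) k" and P: "P < n*d" and x: "x < k"
  shows "(kron W (1\<^sub>m d) * Z) $$ (P,x) = (\<Sum>s<m. W $$ (P div d, s) * Z $$ (s*d + P mod d, x))"
proof -
  have K: "kron W (1\<^sub>m d) \<in> carrier_mat (n*d) (m*d)" using kron_carrier[OF W one_carrier_mat] .
  have Pd: "P mod d < d" "P div d < n" using P mod_less_of_less_mult less_mult_imp_div_less by auto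
  have "(kron W (1\<^sub>m d) * Z) $$ (P,x) = (\<Sum>s<m. \<Sum>j<d. kron W (1\<^sub>m d) $$ (P, s*d+j) * Z $$ (s*d+j,x))"
    by (simp add: mult_entry[OF K Z P x] sum_lessThan_mult)
  also have "\<dots> = (\<Sum>s<m. \<Sum>j<d. if j = P mod d then W $$ (P div d, s) * Z $$ (s*d+j,x) else 0)"
  proof (intro sum.cong refl)
    fix s j assume "s \<in> {..<m}" "j \<in> {..<d}"
    hence t: "s*d + j < m*d" "j < d" using block_index_less by auto
    show "kron W (1\<^sub>m d) $$ (P, s*d+j) * Z $$ (s*d+j,x) = (if j = P mod d then W $$ (P div d, s) * Z $$ (s*d+j,x) else 0)"
      using kron_index[OF W one_carrier_mat P t(1)] t(2) Pd by auto
  qed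
  also have "\<dots> = (\<Sum>s<m. W $$ (P div d, s) * Z $$ (s*d + P mod d, x))" using Pd by simp
  finally show ?thesis .
qed

lemma adj_kron_one: "adj (kron W (1\<^sub>m d)) = kron (adj W) (1\<^sub>m d)"
  by (intro eq_matI) (auto simp: adj_def kron_def less_mult_imp_div_less mod_less_of_less_mult)

lemma mult_adj_kron_one_entry:
  assumes W: "W \<in> carrier_mat n m" and Y: "Y \<in> carrier_mat k (m*d)" and r: "r < k" and q: "q < n*d"
  shows "(Y * adj (kron W (1\<^sub>m d))) $$ (r,q) = (\<Sum>s<m. Y $$ (r, s*d + q mod d) * cnj (W $$ (q div d, s)))"
proof -
  have K: "kron W (1\<^sub>m d) \<in> carrier_mat (n*d) (m*d)" using kron_carrier[OF W one_carrier_mat] .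
  have qd: "q mod d < d" using q mod_less_of_less_mult by auto
  have "Y * adj (kron W (1\<^sub>m d)) = adj (kron W (1\<^sub>m d) * adj Y)"
    using adj_mult[OF K adj_carrier[OF Y]] by (simp add: adj_adj)
  hence "(Y * adj (kron W (1\<^sub>m d))) $$ (r,q) = cnj ((kron W (1\<^sub>m d) * adj Y) $$ (q,r))"
    using adj_entry[OF mult_carrier_mat[OF K adj_carrier[OF Y]] r q] by simp
  also have "\<dots> = cnj (\<Sum>s<m. W $$ (q div d, s) * adj Y $$ (s*d + q mod d, r))"
    by (simp add: kron_one_mult_entry[OF W adj_carrier[OF Y] q r])
  also have "\<dots> = (\<Sum>s<m. Y $$ (r, s*d + q mod d) * cnj (W $$ (q div d, s)))"
  proof -
    have "\<And>s. s < m \<Longrightarrow> adj Y $$ (s*d + q mod d, r) = cnj (Y $$ (r, s*d + q mod d))"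
      using Y r qd block_index_less by (simp add: adj_entry)
    thus ?thesis by (simp add: cnj_sum mult.commute)
  qed
  finally show ?thesis .
qed

lemma kron_one_congruence_entry:
  assumes W: "W \<in> carrier_mat n m" and Y: "Y \<in> carrier_mat (m*d) (m*d)" and p: "p < n*d" and q: "q < n*d"
  shows "(kron W (1\<^sub>m d) * Y * adj (kron W (1\<^sub>m d))) $$ (p,q) =
    (\<Sum>s<m. \<Sum>s'<m. W $$ (p div d, s) * Y $$ (s*d + p mod d, s'*d + q mod d) * cnj (W $$ (q div d, s')))"
proof -
  have K: "kron W (1\<^sub>m d) \<in> carrier_mat (n*d) (m*d)" using kron_carrier[OF W one_carrier_mat] .
  have YJ: "Y * adj (kron W (1\<^sub>m d)) \<in> carrier_mat (m*d) (n*d)" using Y adj_carrier[OF K] by simp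
  have pd: "p mod d < d" using p mod_less_of_less_mult by auto
  have "kron W (1\<^sub>m d) * Y * adj (kron W (1\<^sub>m d)) = kron W (1\<^sub>m d) * (Y * adj (kron W (1\<^sub>m d)))"
    using K Y adj_carrier[OF K] by (simp add: assoc_mult_mat)
  hence "(kron W (1\<^sub>m d) * Y * adj (kron W (1\<^sub>m d))) $$ (p,q)
      = (\<Sum>s<m. W $$ (p div d, s) * (Y * adj (kron W (1\<^sub>m d))) $$ (s*d + p mod d, q))"
    using kron_one_mult_entry[OF W YJ p q] by simp
  also have "\<dots> = (\<Sum>s<m. W $$ (p div d, s) * (\<Sum>s'<m. Y $$ (s*d + p mod d, s'*d + q mod d) * cnj (W $$ (q div d, s'))))"
    using pd block_index_less by (intro sum.cong refl) (simp add: mult_adj_kron_one_entry[OF W Y _ q])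
  finally show ?thesis by (simp add: sum_distrib_left mult.assoc)
qed

lemma isometry_kron_one:
  assumes W: "W \<in> carrier_mat n m" and iso: "adj W * W = 1\<^sub>m m"
  shows "adj (kron W (1\<^sub>m d)) * kron W (1\<^sub>m d) = 1\<^sub>m (m*d)"
proof (rule eq_matI)
  fix p q assume "p < dim_row (1\<^sub>m (m*d) :: complex mat)" "q < dim_col (1\<^sub>m (m*d) :: complex mat)"
  hence p: "p < m*d" and q: "q < m*d" by auto
  have K: "kron W (1\<^sub>m d) \<in> carrier_mat (n*d) (m*d)" using kron_carrier[OF W one_carrier_mat] .
  have pd: "p mod d < d" "q mod d < d" "p div d < m" "q div d < m"
    using p q mod_less_of_less_mult less_mult_imp_div_less by auto
  have "(adj (kron W (1\<^sub>m d)) * kron W (1\<^sub>m d)) $$ (p,q)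
      = (\<Sum>s<n. adj W $$ (p div d, s) * kron W (1\<^sub>m d) $$ (s*d + p mod d, q))"
    unfolding adj_kron_one by (rule kron_one_mult_entry[OF adj_carrier[OF W] K p q])
  also have "\<dots> = (\<Sum>s<n. adj W $$ (p div d, s) * W $$ (s, q div d)) * (if p mod d = q mod d then 1 else 0)"
    unfolding sum_distrib_right
  proof (intro sum.cong refl)
    fix s assume "s \<in> {..<n}"
    hence r: "s*d + p mod d < n*d" using pd block_index_less by auto
    show "adj W $$ (p div d, s) * kron W (1\<^sub>m d) $$ (s*d + p mod d, q) = adj W $$ (p div d, s) * W $$ (s, q div d) * (if p mod d = q mod d then 1 else 0)"
      using kron_index[OF W one_carrier_mat r q] pd by simp
  qed
  also have "\<dots> = (adj W * W) $$ (p div d, q div d) * (if p mod d = q mod d then 1 else 0)"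
    using mult_entry[OF adj_carrier[OF W] W pd(3) pd(4)] by simp
  also have "\<dots> = 1\<^sub>m (m*d) $$ (p,q)"
  proof -
    have "(p div d = q div d \<and> p mod d = q mod d) = (p = q)" by (metis div_mult_mod_eq)
    thus ?thesis unfolding iso using pd p q by auto
  qed
  finally show "(adj (kron W (1\<^sub>m d)) * kron W (1\<^sub>m d)) $$ (p,q) = 1\<^sub>m (m*d) $$ (p,q)" .
qed (use W in \<open>auto simp: adj_kron_one\<close>)

definition matrix_unit :: "nat \<Rightarrow> nat \<Rightarrow> nat \<Rightarrow> complex mat" where
  "matrix_unit n x y = mat n n (\<lambda>(i,j). if i = x \<and> j = y then 1 else 0)"

lemma matrix_unit_congruence_entry:
  assumes V: "V \<in> carrier_mat m n" and x: "x < n" and y: "y < n" and P: "P < m" and Q: "Q < m"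
  shows "(V * matrix_unit n x y * adj V) $$ (P,Q) = V $$ (P,x) * cnj (V $$ (Q,y))"
proof -
  have "(V * matrix_unit n x y * adj V) $$ (P,Q)
      = (\<Sum>k<n. \<Sum>l<n. (V $$ (P,k) * cnj (V $$ (Q,l))) * (if x = k \<and> y = l then 1 else 0))"
    by (simp add: congruence_entry[OF V _ P Q] matrix_unit_def) (intro sum.cong refl, auto)
  also have "\<dots> = V $$ (P,x) * cnj (V $$ (Q,y))" by (rule sum_sum_delta[OF x y])
  finally show ?thesis .
qed

section \<open>Positivity and linearity\<close>

lemma psdI:
  "X \<in> carrier_mat d d \<Longrightarrow> (\<And>v. v \<in> carrier_vec d \<Longrightarrow> \<exists>r::real. r \<ge> 0 \<and>
     (\<Sum>i<d. \<Sum>j<d. cnj (v $ i) * X $$ (i,j) * v $ j) = of_real r) \<Longrightarrow> psd d X"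
  unfolding psd_def Let_def by fastforce

lemma psdD:
  assumes "psd d X" "v \<in> carrier_vec d"
  shows "\<exists>r::real. r \<ge> 0 \<and> (\<Sum>i<d. \<Sum>j<d. cnj (v $ i) * X $$ (i,j) * v $ j) = of_real r"
  using assms unfolding psd_def Let_def
  by (intro exI[of _ "Re (\<Sum>i<d. \<Sum>j<d. cnj (v $ i) * X $$ (i,j) * v $ j)"]) (simp add: complex_eq_iff)

lemma psd_carrier: "psd d X \<Longrightarrow> X \<in> carrier_mat d d"
  unfolding psd_def by auto

lemma psd_congruence:
  assumes X: "psd n X"
  shows "psd m (mat m m (\<lambda>(r,s). \<Sum>t<n. \<Sum>t'<n. A r t * X $$ (t,t') * cnj (A s t')))"
proof (rule psdI)
  fix v :: "complex vec" assume v: "v \<in> carrier_vec m"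
  define w where "w = vec n (\<lambda>t. \<Sum>r<m. cnj (A r t) * v $ r)"
  have "(\<Sum>i<m. \<Sum>j<m. cnj (v $ i) * mat m m (\<lambda>(r,s). \<Sum>t<n. \<Sum>t'<n. A r t * X $$ (t,t') * cnj (A s t')) $$ (i,j) * v $ j)
     = (\<Sum>i<m. \<Sum>j<m. \<Sum>t<n. \<Sum>t'<n. cnj (v $ i) * A i t * X $$ (t,t') * cnj (A j t') * v $ j)"
    by (simp add: sum_distrib_left sum_distrib_right mult.assoc)
  also have "\<dots> = (\<Sum>t<n. \<Sum>t'<n. \<Sum>i<m. \<Sum>j<m. cnj (v $ i) * A i t * X $$ (t,t') * cnj (A j t') * v $ j)"
    by (rule sum_swap_pairs)
  also have "\<dots> = (\<Sum>t<n. \<Sum>t'<n. cnj (w $ t) * X $$ (t,t') * w $ t')"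
    unfolding w_def by (simp add: sum_distrib_left sum_distrib_right mult.assoc mult.commute mult.left_commute)
  finally show "\<exists>r::real. r \<ge> 0 \<and> (\<Sum>i<m. \<Sum>j<m. cnj (v $ i) * mat m m (\<lambda>(r,s). \<Sum>t<n. \<Sum>t'<n. A r t * X $$ (t,t') * cnj (A s t')) $$ (i,j) * v $ j) = of_real r"
    using psdD[OF X, of w] unfolding w_def by simp
qed simp

lemma psd_sum:
  assumes "finite I" "\<forall>b\<in>I. psd n (M b)"
  shows "psd n (mat n n (\<lambda>(i,j). \<Sum>b\<in>I. M b $$ (i,j)))"
proof (rule psdI)
  fix v :: "complex vec" assume v: "v \<in> carrier_vec n"
  obtain r where r: "\<forall>b\<in>I. r b \<ge> 0 \<and> (\<Sum>i<n. \<Sum>j<n. cnj (v $ i) * M b $$ (i,j) * v $ j) = of_real (r b)"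
    using bchoice[of I "\<lambda>b r. r \<ge> 0 \<and> (\<Sum>i<n. \<Sum>j<n. cnj (v $ i) * M b $$ (i,j) * v $ j) = of_real r"]
      assms psdD v by blast
  have "(\<Sum>i<n. \<Sum>j<n. cnj (v $ i) * mat n n (\<lambda>(i,j). \<Sum>b\<in>I. M b $$ (i,j)) $$ (i,j) * v $ j)
      = (\<Sum>b\<in>I. \<Sum>i<n. \<Sum>j<n. cnj (v $ i) * M b $$ (i,j) * v $ j)"
    by (simp add: sum_distrib_left sum_distrib_right mult.assoc, subst sum.swap, rule sum.cong[OF refl], rule sum.swap)
  also have "\<dots> = of_real (\<Sum>b\<in>I. r b)" using r by simp
  finally show "\<exists>r::real. r \<ge> 0 \<and> (\<Sum>i<n. \<Sum>j<n. cnj (v $ i) * mat n n (\<lambda>(i,j). \<Sum>b\<in>I. M b $$ (i,j)) $$ (i,j) * v $ j) = of_real r"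
    using r by (intro exI[of _ "\<Sum>b\<in>I. r b"]) (simp add: sum_nonneg)
qed simp

lemma psd_scale:
  assumes X: "psd n X" and c: "(c::real) \<ge> 0"
  shows "psd n (of_real c \<cdot>\<^sub>m X)"
proof (rule psdI)
  fix v :: "complex vec" assume v: "v \<in> carrier_vec n"
  obtain r where r: "r \<ge> 0" "(\<Sum>i<n. \<Sum>j<n. cnj (v $ i) * X $$ (i,j) * v $ j) = of_real r"
    using psdD[OF X v] by blast
  have "(\<Sum>i<n. \<Sum>j<n. cnj (v $ i) * (of_real c \<cdot>\<^sub>m X) $$ (i,j) * v $ j)
      = of_real c * (\<Sum>i<n. \<Sum>j<n. cnj (v $ i) * X $$ (i,j) * v $ j)"
    using psd_carrier[OF X] by (simp add: sum_distrib_left mult.assoc mult.commute mult.left_commute)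
  thus "\<exists>r::real. r \<ge> 0 \<and> (\<Sum>i<n. \<Sum>j<n. cnj (v $ i) * (of_real c \<cdot>\<^sub>m X) $$ (i,j) * v $ j) = of_real r"
    using r c by (intro exI[of _ "c*r"]) simp
qed (use psd_carrier[OF X] in auto)

definition rank1 :: "nat \<Rightarrow> (nat \<Rightarrow> complex) \<Rightarrow> complex mat" where
  "rank1 n v = mat n n (\<lambda>(i,j). v i * cnj (v j))"

lemma rank1_psd: "psd n (rank1 n v)"
proof (rule psdI)
  fix w :: "complex vec"
  define s where "s = (\<Sum>i<n. cnj (w $ i) * v i)"
  have "(\<Sum>i<n. \<Sum>j<n. cnj (w $ i) * rank1 n v $$ (i,j) * w $ j)
      = (\<Sum>i<n. \<Sum>j<n. (cnj (w $ i) * v i) * cnj (cnj (w $ j) * v j))"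
    by (simp add: rank1_def mult.assoc mult.commute mult.left_commute)
  also have "\<dots> = s * cnj s" unfolding s_def by (simp add: sum_distrib_left sum_distrib_right cnj_sum, rule sum.swap)
  also have "\<dots> = of_real ((cmod s)\<^sup>2)" by (rule complex_norm_square[symmetric])
  finally show "\<exists>r::real. r \<ge> 0 \<and> (\<Sum>i<n. \<Sum>j<n. cnj (w $ i) * rank1 n v $$ (i,j) * w $ j) = of_real r"
    by (intro exI[of _ "(cmod s)\<^sup>2"]) simp
qed (simp add: rank1_def)

lemma kraus_block_entry:
  fixes Y :: "nat \<Rightarrow> nat \<Rightarrow> complex"
  assumes R: "R < n" and S: "S < n"
  shows "(\<Sum>t<n*dIn. \<Sum>t'<n*dIn. (if t div dIn = R then J (t mod dIn) else 0) * Y t t'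
            * cnj (if t' div dIn = S then J' (t' mod dIn) else 0))
       = (\<Sum>k<dIn. \<Sum>l<dIn. J k * Y (R*dIn+k) (S*dIn+l) * cnj (J' l))"
proof -
  have "(\<Sum>t<n*dIn. \<Sum>t'<n*dIn. (if t div dIn = R then J (t mod dIn) else 0) * Y t t'
          * cnj (if t' div dIn = S then J' (t' mod dIn) else 0))
     = (\<Sum>t<n*dIn. if t div dIn = R then (\<Sum>t'<n*dIn. J (t mod dIn) * Y t t'
          * cnj (if t' div dIn = S then J' (t' mod dIn) else 0)) else 0)"
    by (rule sum.cong[OF refl]) auto
  also have "\<dots> = (\<Sum>k<dIn. \<Sum>t'<n*dIn. if t' div dIn = S then J k * Y (R*dIn+k) t' * cnj (J' (t' mod dIn)) else 0)"
    by (subst sum_block_indicator[OF R]) (intro sum.cong refl, auto)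
  also have "\<dots> = (\<Sum>k<dIn. \<Sum>l<dIn. J k * Y (R*dIn+k) (S*dIn+l) * cnj (J' ((S*dIn+l) mod dIn)))"
    by (intro sum.cong refl sum_block_indicator[OF S])
  finally show ?thesis by simp
qed

lemma id_tensor_kraus_psd:
  fixes J :: "nat \<Rightarrow> nat \<Rightarrow> nat \<Rightarrow> complex"
  assumes \<Phi>: "\<forall>Y\<in>carrier_mat dIn dIn. \<Phi> Y = mat dOut dOut (\<lambda>(p,q).
               \<Sum>b<K. \<Sum>k<dIn. \<Sum>l<dIn. J b p k * Y $$ (k,l) * cnj (J b q l))"
    and X: "psd (n*dIn) X"
  shows "psd (n*dOut) (id_tensor n dIn dOut \<Phi> X)"
proof -
  define A where "A b r t = (if t div dIn = r div dOut then J b (r mod dOut) (t mod dIn) else 0)" for b r t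
  define M where "M b = mat (n*dOut) (n*dOut) (\<lambda>(r,s).
    \<Sum>t<n*dIn. \<Sum>t'<n*dIn. A b r t * X $$ (t,t') * cnj (A b s t'))" for b
  have "id_tensor n dIn dOut \<Phi> X = mat (n*dOut) (n*dOut) (\<lambda>(i,j). \<Sum>b\<in>{..<K}. M b $$ (i,j))"
  proof (rule eq_matI)
    fix r s assume "r < dim_row (mat (n*dOut) (n*dOut) (\<lambda>(i,j). \<Sum>b\<in>{..<K}. M b $$ (i,j)))"
      and "s < dim_col (mat (n*dOut) (n*dOut) (\<lambda>(i,j). \<Sum>b\<in>{..<K}. M b $$ (i,j)))"
    hence r: "r < n*dOut" and s: "s < n*dOut" by auto
    have R: "r div dOut < n" and S: "s div dOut < n"
      using r s by (simp_all add: less_mult_imp_div_less)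
    have "id_tensor n dIn dOut \<Phi> X $$ (r,s) = (\<Sum>b<K. \<Sum>k<dIn. \<Sum>l<dIn. J b (r mod dOut) k *
         X $$ ((r div dOut)*dIn + k, (s div dOut)*dIn + l) * cnj (J b (s mod dOut) l))"
      using r s \<Phi> mod_less_of_less_mult by (simp add: id_tensor_index)
    also have "\<dots> = (\<Sum>b<K. \<Sum>t<n*dIn. \<Sum>t'<n*dIn. A b r t * X $$ (t,t') * cnj (A b s t'))"
      unfolding A_def by (intro sum.cong refl kraus_block_entry[OF R S, where Y = "\<lambda>t t'. X $$ (t,t')", symmetric])
    finally show "id_tensor n dIn dOut \<Phi> X $$ (r,s) = mat (n*dOut) (n*dOut) (\<lambda>(i,j). \<Sum>b\<in>{..<K}. M b $$ (i,j)) $$ (r,s)"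
      unfolding M_def using r s by simp
  qed (auto simp: id_tensor_def)
  also have "psd (n*dOut) \<dots>"
    unfolding M_def by (intro psd_sum) (simp_all add: psd_congruence[OF X])
  finally show ?thesis .
qed

definition linmap :: "nat \<Rightarrow> nat \<Rightarrow> (complex mat \<Rightarrow> complex mat) \<Rightarrow> bool" where
  "linmap n m f \<longleftrightarrow> (\<forall>X\<in>carrier_mat n n. f X \<in> carrier_mat m m) \<and>
     (\<forall>X\<in>carrier_mat n n. \<forall>Y\<in>carrier_mat n n. f (X+Y) = f X + f Y) \<and>
     (\<forall>X\<in>carrier_mat n n. \<forall>c. f (c \<cdot>\<^sub>m X) = c \<cdot>\<^sub>m f X)"

lemma CPTP_linmap: "CPTP n m f \<Longrightarrow> linmap n m f"
  by (simp add: CPTP_def linmap_def)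

lemma linmap_zero:
  assumes f: "linmap n m f"
  shows "f (0\<^sub>m n n) = 0\<^sub>m m m"
proof -
  have "f (0\<^sub>m n n) = f (0 \<cdot>\<^sub>m 0\<^sub>m n n)" by simp
  also have "\<dots> = 0 \<cdot>\<^sub>m f (0\<^sub>m n n)" using f zero_carrier_mat unfolding linmap_def by blast
  also have "\<dots> = 0\<^sub>m m m"
  proof -
    have "f (0\<^sub>m n n) \<in> carrier_mat m m" using f unfolding linmap_def by auto
    thus ?thesis by (intro eq_matI) auto
  qed
  finally show ?thesis .
qed

lemma linmap_matrix_sum:
  assumes f: "linmap n m f" and fin: "finite I" and Ms: "\<forall>k\<in>I. Ms k \<in> carrier_mat n n"
  shows "f (mat n n (\<lambda>(i,j). \<Sum>k\<in>I. c k * Ms k $$ (i,j))) = mat m m (\<lambda>(p,q). \<Sum>k\<in>I. c k * f (Ms k) $$ (p,q))"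
  using fin Ms
proof (induction I rule: finite_induct)
  case empty
  have z: "mat n n (\<lambda>(i,j). \<Sum>k\<in>{}. c k * Ms k $$ (i,j)) = 0\<^sub>m n n" by (intro eq_matI) auto
  show ?case unfolding z linmap_zero[OF f] by (intro eq_matI) auto
next
  case (insert k I)
  let ?M = "mat n n (\<lambda>(i,j). \<Sum>k\<in>I. c k * Ms k $$ (i,j))"
  have Mk: "Ms k \<in> carrier_mat n n" using insert by auto
  have d: "mat n n (\<lambda>(i,j). \<Sum>k\<in>insert k I. c k * Ms k $$ (i,j)) = c k \<cdot>\<^sub>m Ms k + ?M"
    using insert Mk by (intro eq_matI) auto
  have "f (c k \<cdot>\<^sub>m Ms k + ?M) = c k \<cdot>\<^sub>m f (Ms k) + f ?M"
    using f Mk unfolding linmap_def by auto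
  moreover have "f ?M = mat m m (\<lambda>(p,q). \<Sum>k\<in>I. c k * f (Ms k) $$ (p,q))"
    using insert by (simp add: case_prod_unfold)
  moreover have "f (Ms k) \<in> carrier_mat m m" using f Mk unfolding linmap_def by auto
  ultimately show ?case unfolding d using insert by (intro eq_matI) auto
qed

lemma linmap_eq_on_rank1:
  assumes f: "linmap n m f" and g: "linmap n m g" and eq: "\<forall>\<rho>. density n \<rho> \<longrightarrow> f \<rho> = g \<rho>"
  shows "f (rank1 n v) = g (rank1 n v)"
proof (cases "\<forall>i<n. v i = 0")
  case True
  hence "rank1 n v = 0\<^sub>m n n" unfolding rank1_def by (intro eq_matI) auto
  thus ?thesis using linmap_zero[OF f] linmap_zero[OF g] by simp
next
  case False
  define tr where "tr = (\<Sum>i<n. (cmod (v i))\<^sup>2)"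
  have t: "(\<Sum>i<n. v i * cnj (v i)) = of_real tr" unfolding tr_def by (simp only: of_real_sum complex_norm_square)
  have "tr \<noteq> 0" using False t sum_cnj_mult_self_eq_0_iff[of v n] by auto
  hence tr: "tr > 0" unfolding tr_def by (simp add: order_le_neq_trans sum_nonneg)
  define \<rho> where "\<rho> = of_real (1/tr) \<cdot>\<^sub>m rank1 n v"
  have "density n \<rho>" unfolding density_def \<rho>_def
  proof
    show "psd n (of_real (1/tr) \<cdot>\<^sub>m rank1 n v)" using rank1_psd tr by (intro psd_scale) auto
    have "mtrace (of_real (1/tr) \<cdot>\<^sub>m rank1 n v) = of_real (1/tr) * of_real tr"
      unfolding mtrace_def rank1_def t[symmetric] by (simp add: sum_distrib_left)
    thus "mtrace (of_real (1/tr) \<cdot>\<^sub>m rank1 n v) = 1" using tr by simp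
  qed
  hence "f \<rho> = g \<rho>" using eq by blast
  moreover have "rank1 n v = of_real tr \<cdot>\<^sub>m \<rho>" unfolding \<rho>_def rank1_def using tr by (intro eq_matI) auto
  moreover have "\<rho> \<in> carrier_mat n n" unfolding \<rho>_def rank1_def by simp
  ultimately show ?thesis using f g unfolding linmap_def by metis
qed

lemma polarization_entry:
  "(\<Sum>k<4. \<i>^k * ((if i=a then 1 else 0) + \<i>^k*(if i=b then 1 else 0)) * cnj ((if j=a then 1 else 0) + \<i>^k * (if j = b then 1 else 0)))
   = (4::complex) * (if i = a \<and> j = b then 1 else 0)"
  by (simp add: numeral_eq_Suc power_Suc)

lemma linmap_eq_on_densities:
  assumes f: "linmap n m f" and g: "linmap n m g" and eq: "\<forall>\<rho>. density n \<rho> \<longrightarrow> f \<rho> = g \<rho>"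
    and \<tau>: "\<tau> \<in> carrier_mat n n"
  shows "f \<tau> = g \<tau>"
proof -
  define I where "I = {..<n} \<times> ({..<n} \<times> {..<4::nat})"
  define vv where "vv x = (\<lambda>i. (if i = fst x then 1 else 0) + \<i>^(snd (snd x)) * (if i = fst (snd x) then 1 else 0))"
    for x :: "nat \<times> nat \<times> nat"
  define cc where "cc x = \<tau> $$ (fst x, fst (snd x)) * \<i>^(snd (snd x)) / 4" for x :: "nat \<times> nat \<times> nat"
  have fin: "finite I" unfolding I_def by simp
  have car: "\<forall>x\<in>I. rank1 n (vv x) \<in> carrier_mat n n" by (simp add: rank1_def)
  have rep: "\<tau> = mat n n (\<lambda>(i,j). \<Sum>x\<in>I. cc x * rank1 n (vv x) $$ (i,j))"
  proof (rule eq_matI)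
    fix i j assume "i < dim_row (mat n n (\<lambda>(i,j). \<Sum>x\<in>I. cc x * rank1 n (vv x) $$ (i,j)))"
      "j < dim_col (mat n n (\<lambda>(i,j). \<Sum>x\<in>I. cc x * rank1 n (vv x) $$ (i,j)))"
    hence i: "i < n" and j: "j < n" by auto
    have "(\<Sum>x\<in>I. cc x * rank1 n (vv x) $$ (i,j))
        = (\<Sum>a<n. \<Sum>b<n. \<Sum>k<4. cc (a,b,k) * (vv (a,b,k) i * cnj (vv (a,b,k) j)))"
      unfolding I_def using i j by (simp add: rank1_def sum.cartesian_product)
    also have "\<dots> = (\<Sum>a<n. \<Sum>b<n. \<tau> $$ (a,b) * (if i = a \<and> j = b then 1 else 0))"
    proof (intro sum.cong refl)
      fix a b
      have "(\<Sum>k<4. cc (a,b,k) * (vv (a,b,k) i * cnj (vv (a,b,k) j))) =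
        \<tau> $$ (a,b) / 4 * (\<Sum>k<4. \<i>^k * ((if i=a then 1 else 0) + \<i>^k*(if i=b then 1 else 0))
                          * cnj ((if j=a then 1 else 0) + \<i>^k * (if j = b then 1 else 0)))"
        unfolding cc_def vv_def by (simp add: sum_distrib_left mult.assoc mult.commute mult.left_commute)
      thus "(\<Sum>k<4. cc (a,b,k) * (vv (a,b,k) i * cnj (vv (a,b,k) j))) = \<tau> $$ (a,b) * (if i = a \<and> j = b then 1 else 0)"
        unfolding polarization_entry by simp
    qed
    also have "\<dots> = \<tau> $$ (i,j)" by (rule sum_sum_delta[OF i j])
    finally show "\<tau> $$ (i,j) = mat n n (\<lambda>(i,j). \<Sum>x\<in>I. cc x * rank1 n (vv x) $$ (i,j)) $$ (i,j)" using i j by simp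
  qed (use \<tau> in auto)
  have "f \<tau> = mat m m (\<lambda>(p,q). \<Sum>x\<in>I. cc x * f (rank1 n (vv x)) $$ (p,q))"
    by (subst rep, rule linmap_matrix_sum[OF f fin car])
  also have "\<dots> = mat m m (\<lambda>(p,q). \<Sum>x\<in>I. cc x * g (rank1 n (vv x)) $$ (p,q))"
    using linmap_eq_on_rank1[OF f g eq] by simp
  also have "\<dots> = g \<tau>"
    by (subst rep, rule linmap_matrix_sum[OF g fin car, symmetric])
  finally show ?thesis .
qed

section \<open>Appending a uniform state, and conjugating by an isometry\<close>

lemma kron_unif_kraus:
  assumes dB: "0 < dB" and Y: "Y \<in> carrier_mat dA dA"
  shows "kron (unif dB) Y = mat (dB*dA) (dB*dA) (\<lambda>(p,q). \<Sum>b<dB. \<Sum>k<dA. \<Sum>l<dA.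
     (if p div dA = b \<and> p mod dA = k then of_real (1 / sqrt (real dB)) else 0) * Y $$ (k,l) *
     cnj (if q div dA = b \<and> q mod dA = l then of_real (1 / sqrt (real dB)) else 0))"
    (is "_ = mat _ _ ?kraus")
proof (rule eq_matI)
  fix p q assume "p < dim_row (mat (dB*dA) (dB*dA) ?kraus)" "q < dim_col (mat (dB*dA) (dB*dA) ?kraus)"
  hence p: "p < dB*dA" and q: "q < dB*dA" by auto
  have pm: "p mod dA < dA" "q mod dA < dA" and pd: "p div dA < dB" "q div dA < dB"
    using p q mod_less_of_less_mult less_mult_imp_div_less by auto
  define c :: complex where "c = of_real (1 / sqrt (real dB))"
  have cc: "c * cnj c = 1 / of_nat dB"
    unfolding c_def using dB by (simp flip: of_real_mult)
  have "(\<Sum>b<dB. \<Sum>k<dA. \<Sum>l<dA. (if p div dA = b \<and> p mod dA = k then c else 0) * Y $$ (k,l) *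
          cnj (if q div dA = b \<and> q mod dA = l then c else 0))
      = (\<Sum>b<dB. \<Sum>k<dA. \<Sum>l<dA. if l = q mod dA then if k = p mod dA then if b = p div dA then
           (if b = q div dA then c * cnj c * Y $$ (p mod dA, q mod dA) else 0) else 0 else 0 else 0)"
    by (intro sum.cong refl) (auto simp: mult.commute)
  also have "\<dots> = (if p div dA = q div dA then (1 / of_nat dB) * Y $$ (p mod dA, q mod dA) else 0)"
    using pm pd cc by simp
  also have "\<dots> = kron (unif dB) Y $$ (p,q)"
    using p q pd by (simp add: kron_index[OF unif_carrier(1) Y] unif_entry)
  finally show "kron (unif dB) Y $$ (p,q) = mat (dB*dA) (dB*dA) ?kraus $$ (p,q)"
    using p q unfolding c_def by simp
qed (use Y in auto)

lemma CPTP_kron_unif: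
  assumes dB: "0 < dB"
  shows "CPTP dA (dB*dA) (kron (unif dB))"
  unfolding CPTP_def
proof (intro conjI ballI allI impI)
  fix X :: "complex mat" assume X: "X \<in> carrier_mat dA dA"
  show "kron (unif dB) X \<in> carrier_mat (dB*dA) (dB*dA)" using kron_carrier[OF unif_carrier(1) X] .
  show "mtrace (kron (unif dB) X) = mtrace X" using mtrace_kron[OF unif_carrier(1) X] mtrace_unif[OF dB] by simp
  fix c show "kron (unif dB) (c \<cdot>\<^sub>m X) = c \<cdot>\<^sub>m kron (unif dB) X" using kron_smult_right[OF X unif_carrier(1)] .
next
  fix X Y :: "complex mat" assume "X \<in> carrier_mat dA dA" "Y \<in> carrier_mat dA dA"
  thus "kron (unif dB) (X + Y) = kron (unif dB) X + kron (unif dB) Y" using kron_add_right unif_carrier(1) by blast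
next
  fix n :: nat and X assume "psd (n*dA) X"
  thus "psd (n*(dB*dA)) (id_tensor n dA (dB*dA) (kron (unif dB)) X)"
    using kron_unif_kraus[OF dB] by (intro id_tensor_kraus_psd) auto
qed

lemma marg_uniform_kron_unif:
  assumes "0 < dB"
  shows "marg_uniform dA dB dA (kron (unif dB))"
  unfolding marg_uniform_def using ptrace_kron_unif[OF assms] by simp

lemma CPTP_isometry_precompose:
  assumes J: "J \<in> carrier_mat m n" and iso: "adj J * J = 1\<^sub>m n" and E: "CPTP m d E"
  shows "CPTP n d (\<lambda>Y. E (J * Y * adj J))"
proof -
  have JY: "J * Y * adj J \<in> carrier_mat m m" if "Y \<in> carrier_mat n n" for Y
    using J that adj_carrier[OF J] by simp
  have kraus: "J * Y * adj J = mat m m (\<lambda>(p,q). \<Sum>b<1::nat. \<Sum>k<n. \<Sum>l<n. J $$ (p,k) * Y $$ (k,l) * cnj (J $$ (q,l)))"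
    if Y: "Y \<in> carrier_mat n n" for Y
    using J JY[OF Y] by (intro eq_matI) (simp_all add: congruence_entry[OF J Y] del: index_mult_mat)
  have Ec: "\<forall>X\<in>carrier_mat m m. E X \<in> carrier_mat d d"
    and Ea: "\<forall>X\<in>carrier_mat m m. \<forall>Y\<in>carrier_mat m m. E (X + Y) = E X + E Y"
    and Es: "\<forall>X\<in>carrier_mat m m. \<forall>c. E (c \<cdot>\<^sub>m X) = c \<cdot>\<^sub>m E X"
    and Et: "\<forall>X\<in>carrier_mat m m. mtrace (E X) = mtrace X"
    and Ecp: "\<forall>k>0. \<forall>X. psd (k*m) X \<longrightarrow> psd (k*d) (id_tensor k m d E X)"
    using E unfolding CPTP_def by blast+
  show ?thesis unfolding CPTP_def
  proof (intro conjI ballI allI impI)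
    fix X :: "complex mat" assume X: "X \<in> carrier_mat n n"
    show "E (J * X * adj J) \<in> carrier_mat d d" using Ec JY[OF X] by blast
    show "mtrace (E (J * X * adj J)) = mtrace X" using Et JY[OF X] mtrace_isometry_congruence[OF J iso X] by simp
    fix c :: complex
    have "J * (c \<cdot>\<^sub>m X) * adj J = c \<cdot>\<^sub>m (J * X * adj J)"
      using J X by (simp add: mult_smult_distrib mult_smult_assoc_mat[OF mult_carrier_mat[OF J X] adj_carrier[OF J]])
    thus "E (J * (c \<cdot>\<^sub>m X) * adj J) = c \<cdot>\<^sub>m E (J * X * adj J)" using Es JY[OF X] by simp
  next
    fix X Y :: "complex mat" assume X: "X \<in> carrier_mat n n" and Y: "Y \<in> carrier_mat n n"
    have "J * (X + Y) * adj J = J * X * adj J + J * Y * adj J"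
      using J X Y by (simp add: mult_add_distrib_mat add_mult_distrib_mat[OF mult_carrier_mat[OF J X] mult_carrier_mat[OF J Y] adj_carrier[OF J]])
    thus "E (J * (X + Y) * adj J) = E (J * X * adj J) + E (J * Y * adj J)" using Ea JY[OF X] JY[OF Y] by simp
  next
    fix k :: nat and X assume k: "0 < k" and X: "psd (k*n) X"
    have "psd (k*m) (id_tensor k n m (\<lambda>Y. J * Y * adj J) X)"
      by (rule id_tensor_kraus_psd[where K=1 and J="\<lambda>b p k. J $$ (p,k)"]) (use kraus X in auto)
    hence "psd (k*d) (id_tensor k m d E (id_tensor k n m (\<lambda>Y. J * Y * adj J) X))" using Ecp k by blast
    thus "psd (k*d) (id_tensor k n d (\<lambda>Y. E (J * Y * adj J)) X)"
      using id_tensor_comp[of n "\<lambda>Y. J * Y * adj J" m k d E X] JY by simp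
  qed
qed

lemma id_tensor_isometry_congruence:
  assumes N: "linmap dA dB N" and W: "W \<in> carrier_mat dR dS" and Z: "Z \<in> carrier_mat (dS*dA) (dS*dA)"
  shows "kron W (1\<^sub>m dB) * id_tensor dS dA dB N Z * adj (kron W (1\<^sub>m dB)) =
    id_tensor dR dA dB N (kron W (1\<^sub>m dA) * Z * adj (kron W (1\<^sub>m dA)))"
proof (rule eq_matI)
  fix p q assume "p < dim_row (id_tensor dR dA dB N (kron W (1\<^sub>m dA) * Z * adj (kron W (1\<^sub>m dA))))"
    "q < dim_col (id_tensor dR dA dB N (kron W (1\<^sub>m dA) * Z * adj (kron W (1\<^sub>m dA))))"
  hence p: "p < dR*dB" and q: "q < dR*dB" by auto
  define a where "a = p div dB"
  define a' where "a' = q div dB"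
  define b where "b = p mod dB"
  define b' where "b' = q mod dB"
  have ab: "a < dR" "a' < dR" "b < dB" "b' < dB"
    unfolding a_def a'_def b_def b'_def using p q less_mult_imp_div_less mod_less_of_less_mult by auto
  define blk where "blk x = mat dA dA (\<lambda>(i,j). Z $$ (fst x * dA + i, snd x * dA + j))" for x :: "nat \<times> nat"
  define I where "I = {..<dS} \<times> {..<dS}"
  define WZW where "WZW = kron W (1\<^sub>m dA) * Z * adj (kron W (1\<^sub>m dA))"
  have "(kron W (1\<^sub>m dB) * id_tensor dS dA dB N Z * adj (kron W (1\<^sub>m dB))) $$ (p,q)
     = (\<Sum>s<dS. \<Sum>s'<dS. W $$ (a, s) * id_tensor dS dA dB N Z $$ (s*dB + b, s'*dB + b') * cnj (W $$ (a', s')))"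
    unfolding a_def a'_def b_def b'_def by (rule kron_one_congruence_entry[OF W id_tensor_dim(3) p q])
  also have "\<dots> = (\<Sum>x\<in>I. (W $$ (a, fst x) * cnj (W $$ (a', snd x))) * N (blk x) $$ (b,b'))"
    unfolding I_def sum.cartesian_product using ab block_index_less
    by (intro sum.cong refl) (auto simp: id_tensor_index blk_def)
  also have "\<dots> = N (mat dA dA (\<lambda>(i,j). \<Sum>x\<in>I. (W $$ (a, fst x) * cnj (W $$ (a', snd x))) * blk x $$ (i,j))) $$ (b,b')"
    by (subst linmap_matrix_sum[OF N]) (use ab in \<open>simp_all add: I_def blk_def\<close>)
  also have "mat dA dA (\<lambda>(i,j). \<Sum>x\<in>I. (W $$ (a, fst x) * cnj (W $$ (a', snd x))) * blk x $$ (i,j))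
     = mat dA dA (\<lambda>(i,j). WZW $$ (a*dA + i, a'*dA + j))"
  proof (rule eq_matI)
    fix i j assume "i < dim_row (mat dA dA (\<lambda>(i,j). WZW $$ (a*dA + i, a'*dA + j)))"
      "j < dim_col (mat dA dA (\<lambda>(i,j). WZW $$ (a*dA + i, a'*dA + j)))"
    hence i: "i < dA" and j: "j < dA" by auto
    have r: "a*dA + i < dR*dA" "a'*dA + j < dR*dA" using i j ab block_index_less by auto
    show "mat dA dA (\<lambda>(i,j). \<Sum>x\<in>I. (W $$ (a, fst x) * cnj (W $$ (a', snd x))) * blk x $$ (i,j)) $$ (i,j) =
      mat dA dA (\<lambda>(i,j). WZW $$ (a*dA + i, a'*dA + j)) $$ (i,j)"
      using i j kron_one_congruence_entry[OF W Z r] unfolding I_def blk_def WZW_def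
      by (simp add: sum.cartesian_product case_prod_beta mult.commute mult.left_commute mult.assoc)
  qed auto
  also have "N (mat dA dA (\<lambda>(i,j). WZW $$ (a*dA + i, a'*dA + j))) $$ (b,b') = id_tensor dR dA dB N WZW $$ (p,q)"
    unfolding id_tensor_index[OF p q] a_def a'_def b_def b'_def ..
  finally show "(kron W (1\<^sub>m dB) * id_tensor dS dA dB N Z * adj (kron W (1\<^sub>m dB))) $$ (p,q) =
    id_tensor dR dA dB N (kron W (1\<^sub>m dA) * Z * adj (kron W (1\<^sub>m dA))) $$ (p,q)"
    unfolding WZW_def .
qed (use W in \<open>auto simp: adj_def kron_def\<close>)

section \<open>Conditionally unital channels preserve marginal uniformity\<close>

definition lin_cond_unital :: "nat \<Rightarrow> nat \<Rightarrow> (complex mat \<Rightarrow> complex mat) \<Rightarrow> bool" where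
  "lin_cond_unital dR dB E \<longleftrightarrow> (\<forall>\<tau>\<in>carrier_mat dR dR. E (kron \<tau> (unif dB)) = mtrace \<tau> \<cdot>\<^sub>m unif dB)"

lemma linmap_kron_unif:
  assumes "linmap (dR*dB) dB E"
  shows "linmap dR dB (\<lambda>\<tau>. E (kron \<tau> (unif dB)))"
  using assms unfolding linmap_def
  by (auto simp: kron_add_left[of _ dR _ _ dB] kron_smult_left[of _ dR _ dB] kron_carrier)

lemma linmap_trace_unif: "linmap dR dB (\<lambda>\<tau>. mtrace \<tau> \<cdot>\<^sub>m unif dB)"
  unfolding linmap_def mtrace_def
  by (auto intro!: eq_matI simp: sum.distrib sum_distrib_left algebra_simps)

lemma cond_unital_iff_lin_cond_unital:
  assumes E: "linmap (dR*dB) dB E"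
  shows "cond_unital dR dB E \<longleftrightarrow> lin_cond_unital dR dB E"
proof
  assume cu: "cond_unital dR dB E"
  have "E (kron \<rho> (unif dB)) = mtrace \<rho> \<cdot>\<^sub>m unif dB" if "density dR \<rho>" for \<rho>
    using cu that unfolding cond_unital_def density_def by (auto intro!: eq_matI)
  thus "lin_cond_unital dR dB E"
    unfolding lin_cond_unital_def using linmap_eq_on_densities[OF linmap_kron_unif[OF E] linmap_trace_unif] by blast
next
  assume "lin_cond_unital dR dB E"
  thus "cond_unital dR dB E"
    unfolding lin_cond_unital_def cond_unital_def density_def psd_def by (auto intro!: eq_matI)
qed

text \<open>
  For marginally uniform N, the (c,c') block of the input of E with respect to C1 is
  superch_block c c' \<otimes> u.
\<close>

definition superch_block ::
  "nat \<Rightarrow> nat \<Rightarrow> nat \<Rightarrow> nat \<Rightarrow> complex mat \<Rightarrow> nat \<Rightarrow> nat \<Rightarrow> (complex mat \<Rightarrow> complex mat)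
     \<Rightarrow> complex mat \<Rightarrow> nat \<Rightarrow> nat \<Rightarrow> complex mat" where
  "superch_block dA' dA dB dR V dC0 dC1 N X c c' = mat dR dR (\<lambda>(a,a'). ptrace_first dB dC1
     (N (mat (dA*dC0) (dA*dC0) (\<lambda>(k,l). tensor_id dA' (dR*dA) (\<lambda>Y. V*Y*adj V) dC0 X
            $$ (a*(dA*dC0)+k, a'*(dA*dC0)+l)))) $$ (c,c'))"

lemma superch_ext_entry:
  assumes dB: "0 < dB" and dC1: "0 < dC1" and N: "marg_uniform (dA*dC0) dB dC1 N"
    and r: "r < dB*dC1" and s: "s < dB*dC1"
  shows "superch_ext dA' dA dB dR V E dC0 dC1 N X $$ (r,s) =
    E (kron (superch_block dA' dA dB dR V dC0 dC1 N X (r mod dC1) (s mod dC1)) (unif dB)) $$ (r div dC1, s div dC1)"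
proof -
  define T1 where "T1 = tensor_id dA' (dR*dA) (\<lambda>Y. V * Y * adj V) dC0 X"
  define T2 where "T2 = id_tensor dR (dA*dC0) (dB*dC1) N T1"
  define \<tau> where "\<tau> = superch_block dA' dA dB dR V dC0 dC1 N X (r mod dC1) (s mod dC1)"
  let ?c = "r mod dC1" and ?c' = "s mod dC1"
  have c: "?c < dC1" and c': "?c' < dC1" using dC1 by auto
  have "mat (dR*dB) (dR*dB) (\<lambda>(i,j). T2 $$ (i*dC1 + ?c, j*dC1 + ?c')) = kron \<tau> (unif dB)"
  proof (rule eq_matI)
    fix i j assume "i < dim_row (kron \<tau> (unif dB))" "j < dim_col (kron \<tau> (unif dB))"
    hence i: "i < dR*dB" and j: "j < dR*dB" by (simp_all add: \<tau>_def superch_block_def)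
    let ?B = "mat (dA*dC0) (dA*dC0) (\<lambda>(k,l). T1 $$ ((i div dB)*(dA*dC0) + k, (j div dB)*(dA*dC0) + l))"
    have NB: "N ?B = kron (unif dB) (ptrace_first dB dC1 (N ?B))" using N unfolding marg_uniform_def by simp
    have im: "i mod dB < dB" "j mod dB < dB" using dB by auto
    have "T2 $$ (i*dC1 + ?c, j*dC1 + ?c') = N ?B $$ ((i mod dB)*dC1 + ?c, (j mod dB)*dC1 + ?c')"
      unfolding T2_def by (rule id_tensor_index_split_output[OF i j c c'])
    also have "\<dots> = unif dB $$ (i mod dB, j mod dB) * ptrace_first dB dC1 (N ?B) $$ (?c, ?c')"
      by (subst NB, subst kron_index[of _ dB dB _ dC1 dC1])
         (use block_index_less[OF im(1) c] block_index_less[OF im(2) c'] c c' in simp_all)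
    finally show "mat (dR*dB) (dR*dB) (\<lambda>(i,j). T2 $$ (i*dC1 + ?c, j*dC1 + ?c')) $$ (i,j) = kron \<tau> (unif dB) $$ (i,j)"
      using i j less_mult_imp_div_less[OF i] less_mult_imp_div_less[OF j] im
      by (simp add: kron_index[of _ dR dR _ dB dB] \<tau>_def superch_block_def T1_def mult.commute)
  qed (simp_all add: \<tau>_def superch_block_def)
  moreover have "superch_ext dA' dA dB dR V E dC0 dC1 N X $$ (r,s)
      = E (mat (dR*dB) (dR*dB) (\<lambda>(i,j). T2 $$ (i*dC1 + ?c, j*dC1 + ?c'))) $$ (r div dC1, s div dC1)"
    unfolding superch_ext_def T2_def T1_def using r s by (simp add: tensor_id_index)
  ultimately show ?thesis unfolding \<tau>_def by simp
qed

lemma marg_uniform_superch_ext: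
  assumes E: "lin_cond_unital dR dB E" and dB: "0 < dB" and dC1: "0 < dC1"
    and N: "marg_uniform (dA*dC0) dB dC1 N"
  shows "marg_uniform (dA'*dC0) dB dC1 (superch_ext dA' dA dB dR V E dC0 dC1 N)"
  unfolding marg_uniform_def
proof
  fix X :: "complex mat"
  define F where "F = superch_ext dA' dA dB dR V E dC0 dC1 N X"
  define t where "t c c' = mtrace (superch_block dA' dA dB dR V dC0 dC1 N X c c')" for c c'
  have F_entry: "F $$ (r,s) = t (r mod dC1) (s mod dC1) * unif dB $$ (r div dC1, s div dC1)"
    if r: "r < dB*dC1" and s: "s < dB*dC1" for r s
    using superch_ext_entry[OF dB dC1 N r s] E less_mult_imp_div_less[OF r] less_mult_imp_div_less[OF s]
    unfolding F_def t_def lin_cond_unital_def by (simp add: superch_block_def)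
  show "F = kron (unif dB) (ptrace_first dB dC1 F)"
  proof (rule eq_matI)
    fix r s assume "r < dim_row (kron (unif dB) (ptrace_first dB dC1 F))" "s < dim_col (kron (unif dB) (ptrace_first dB dC1 F))"
    hence r: "r < dB*dC1" and s: "s < dB*dC1" by simp_all
    have c: "r mod dC1 < dC1" "s mod dC1 < dC1" using dC1 by auto
    have "ptrace_first dB dC1 F $$ (r mod dC1, s mod dC1) = (\<Sum>k<dB. F $$ (k*dC1 + r mod dC1, k*dC1 + s mod dC1))"
      using c by (simp add: ptrace_index)
    also have "\<dots> = (\<Sum>k<dB. t (r mod dC1) (s mod dC1) * (1 / of_nat dB))"
      using c block_index_less by (intro sum.cong refl) (simp add: F_entry unif_entry)
    also have "\<dots> = t (r mod dC1) (s mod dC1)" using dB by simp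
    finally show "F $$ (r,s) = kron (unif dB) (ptrace_first dB dC1 F) $$ (r,s)"
      using F_entry[OF r s] r s by (simp add: kron_index[of _ dB dB _ dC1 dC1] mult.commute)
  qed (simp_all add: F_def)
qed

lemma cond_unital_imp_compl_unif_preserving:
  assumes E: "CPTP (dR*dB) dB E" and cu: "cond_unital dR dB E" and dB: "0 < dB"
  shows "compl_unif_preserving dA' dA dB dR V E"
  using marg_uniform_superch_ext[OF cu[unfolded cond_unital_iff_lin_cond_unital[OF CPTP_linmap[OF E]]] dB]
  unfolding compl_unif_preserving_def by blast

lemma compl_unif_preserving_imp_marg_uniform_on_kron_unif:
  assumes "compl_unif_preserving dA' dA dB dR V E" and dB: "0 < dB" and dA: "0 < dA"
  shows "marg_uniform dA' dB dA (superch_ext dA' dA dB dR V E 1 dA (kron (unif dB)))"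
proof -
  have "0 < (1::nat) \<and> 0 < dA \<and> CPTP (dA*1) (dB*dA) (kron (unif dB)) \<and> marg_uniform (dA*1) dB dA (kron (unif dB))"
    using CPTP_kron_unif[OF dB] marg_uniform_kron_unif[OF dB] dA by simp
  hence "marg_uniform (dA'*1) dB dA (superch_ext dA' dA dB dR V E 1 dA (kron (unif dB)))"
    using assms(1) unfolding compl_unif_preserving_def by blast
  thus ?thesis by simp
qed

section \<open>Condition (2) forces conditional unitality in standard form\<close>

definition R_block :: "nat \<Rightarrow> nat \<Rightarrow> complex mat \<Rightarrow> nat \<Rightarrow> nat \<Rightarrow> complex mat" where
  "R_block dR dA Y c c' = mat dR dR (\<lambda>(a,a'). Y $$ (a*dA + c, a'*dA + c'))"

lemma superch_block_kron_unif:
  assumes V: "V \<in> carrier_mat (dR*dA) dA'" and X: "X \<in> carrier_mat dA' dA'" and dB: "0 < dB"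
    and c: "c < dA" and c': "c' < dA"
  shows "superch_block dA' dA dB dR V 1 dA (kron (unif dB)) X c c' = R_block dR dA (V*X*adj V) c c'"
proof -
  have "tensor_id dA' (dR*dA) (\<lambda>Y. V*Y*adj V) 1 X = V*X*adj V"
  proof (rule eq_matI)
    fix r s assume "r < dim_row (V*X*adj V)" "s < dim_col (V*X*adj V)"
    hence r: "r < dR*dA*1" and s: "s < dR*dA*1" using V by simp_all
    have "mat dA' dA' (\<lambda>(i,j). X $$ (i*1 + r mod 1, j*1 + s mod 1)) = X" using X by (intro eq_matI) auto
    thus "tensor_id dA' (dR*dA) (\<lambda>Y. V*Y*adj V) 1 X $$ (r,s) = (V*X*adj V) $$ (r,s)"
      unfolding tensor_id_index[OF r s] by simp
  qed (use V in simp_all)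
  moreover have "ptrace_first dB dA (kron (unif dB) (mat dA dA (\<lambda>(k,l). (V*X*adj V) $$ (a*dA+k, a'*dA+l))))
       = mat dA dA (\<lambda>(k,l). (V*X*adj V) $$ (a*dA+k, a'*dA+l))" for a a'
    by (rule ptrace_kron_unif[OF dB]) simp
  ultimately show ?thesis
    using c c' unfolding superch_block_def R_block_def by (intro eq_matI) simp_all
qed

lemma lin_cond_unital_on_R_blocks:
  assumes E: "CPTP (dR*dB) dB E" and dB: "0 < dB" and dA: "0 < dA" and V: "V \<in> carrier_mat (dR*dA) dA'"
    and test: "marg_uniform dA' dB dA (superch_ext dA' dA dB dR V E 1 dA (kron (unif dB)))"
    and X: "X \<in> carrier_mat dA' dA'" and c: "c < dA" and c': "c' < dA"
  shows "E (kron (R_block dR dA (V*X*adj V) c c') (unif dB)) = mtrace (R_block dR dA (V*X*adj V) c c') \<cdot>\<^sub>m unif dB"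
proof -
  define \<tau> where "\<tau> c c' = R_block dR dA (V*X*adj V) c c'" for c c'
  define F where "F = superch_ext dA' dA dB dR V E 1 dA (kron (unif dB)) X"
  have \<tau>: "\<tau> c1 c1' \<in> carrier_mat dR dR" for c1 c1' unfolding \<tau>_def R_block_def by simp
  have E\<tau>: "E (kron (\<tau> c c') (unif dB)) \<in> carrier_mat dB dB" and tr_E\<tau>: "mtrace (E (kron (\<tau> c c') (unif dB))) = mtrace (\<tau> c c')"
    using E kron_carrier[OF \<tau> unif_carrier(1)] mtrace_kron[OF \<tau> unif_carrier(1)] mtrace_unif[OF dB]
    unfolding CPTP_def by auto
  have F_entry: "F $$ (\<beta>*dA + c1, \<beta>'*dA + c1') = E (kron (\<tau> c1 c1') (unif dB)) $$ (\<beta>, \<beta>')"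
    if "\<beta> < dB" "\<beta>' < dB" "c1 < dA" "c1' < dA" for \<beta> \<beta>' c1 c1'
  proof -
    have "marg_uniform (dA*1) dB dA (kron (unif dB))" using marg_uniform_kron_unif[OF dB] by simp
    thus ?thesis
      using superch_ext_entry[of dB dA dA 1 _ "\<beta>*dA + c1" "\<beta>'*dA + c1'"]
        superch_block_kron_unif[OF V X dB] block_index_less that dB dA
      unfolding F_def \<tau>_def by simp
  qed
  have F: "F = kron (unif dB) (ptrace_first dB dA F)" using test X unfolding marg_uniform_def F_def by blast
  have "ptrace_first dB dA F $$ (c,c') = (\<Sum>k<dB. E (kron (\<tau> c c') (unif dB)) $$ (k,k))"
    using c c' F_entry by (simp add: ptrace_index)
  also have "\<dots> = mtrace (\<tau> c c')" using E\<tau> tr_E\<tau> unfolding mtrace_def by simp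
  finally have tr: "ptrace_first dB dA F $$ (c,c') = mtrace (\<tau> c c')" .
  have "E (kron (\<tau> c c') (unif dB)) = mtrace (\<tau> c c') \<cdot>\<^sub>m unif dB"
  proof (rule eq_matI)
    fix \<beta> \<beta>' assume "\<beta> < dim_row (mtrace (\<tau> c c') \<cdot>\<^sub>m unif dB)" "\<beta>' < dim_col (mtrace (\<tau> c c') \<cdot>\<^sub>m unif dB)"
    hence b: "\<beta> < dB" "\<beta>' < dB" by auto
    have r: "\<beta>*dA + c < dB*dA" "\<beta>'*dA + c' < dB*dA" using block_index_less b c c' by auto
    have "E (kron (\<tau> c c') (unif dB)) $$ (\<beta>,\<beta>') = kron (unif dB) (ptrace_first dB dA F) $$ (\<beta>*dA + c, \<beta>'*dA + c')"
      using F_entry[OF b c c'] F by simp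
    also have "\<dots> = unif dB $$ (\<beta>,\<beta>') * mtrace (\<tau> c c')"
      using kron_index[OF unif_carrier(1) ptrace_carrier(1) r] c c' tr by simp
    finally show "E (kron (\<tau> c c') (unif dB)) $$ (\<beta>,\<beta>') = (mtrace (\<tau> c c') \<cdot>\<^sub>m unif dB) $$ (\<beta>,\<beta>')" using b by simp
  qed (use E\<tau> in auto)
  thus ?thesis unfolding \<tau>_def .
qed

text \<open>V reshaped into an R \<times> (A A') matrix K, so that K K* = Tr_A (V V*).\<close>

definition R_factor :: "nat \<Rightarrow> nat \<Rightarrow> nat \<Rightarrow> complex mat \<Rightarrow> complex mat" where
  "R_factor dR dA dA' V = mat dR (dA*dA') (\<lambda>(a,t). V $$ (a*dA + t div dA', t mod dA'))"

lemma R_factor_carrier: "R_factor dR dA dA' V \<in> carrier_mat dR (dA*dA')"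
  by (simp add: R_factor_def)

lemma gram_invertible_congruence:
  assumes K: "K \<in> carrier_mat n D" and B: "B \<in> carrier_mat n n"
    and inv1: "K * adj K * B = 1\<^sub>m n" and inv2: "B * (K * adj K) = 1\<^sub>m n" and \<tau>: "\<tau> \<in> carrier_mat n n"
  shows "\<tau> = K * (adj K * B * \<tau> * B * K) * adj K"
proof -
  have aK: "adj K \<in> carrier_mat D n" using adj_carrier[OF K] .
  have aKB: "adj K * B \<in> carrier_mat D n" using aK B by (rule mult_carrier_mat)
  have aKBt: "adj K * B * \<tau> \<in> carrier_mat D n" using aKB \<tau> by (rule mult_carrier_mat)
  have aKBtB: "adj K * B * \<tau> * B \<in> carrier_mat D n" using aKBt B by (rule mult_carrier_mat)
  have KaK: "K * adj K \<in> carrier_mat n n" using K aK by (rule mult_carrier_mat)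
  have "\<tau> = (K * adj K * B) * \<tau> * (B * (K * adj K))" unfolding inv1 inv2 using \<tau> by simp
  also have "\<dots> = K * (adj K * B) * \<tau> * (B * (K * adj K))" by (simp only: assoc_mult_mat[OF K aK B])
  also have "\<dots> = K * (adj K * B * \<tau>) * (B * (K * adj K))" by (simp only: assoc_mult_mat[OF K aKB \<tau>])
  also have "\<dots> = K * (adj K * B * \<tau> * (B * (K * adj K)))"
    by (rule assoc_mult_mat[OF K aKBt mult_carrier_mat[OF B KaK]])
  also have "adj K * B * \<tau> * (B * (K * adj K)) = adj K * B * \<tau> * B * (K * adj K)"
    by (rule assoc_mult_mat[OF aKBt B KaK, symmetric])
  also have "\<dots> = adj K * B * \<tau> * B * K * adj K"
    by (rule assoc_mult_mat[OF aKBtB K aK, symmetric])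
  also have "K * (adj K * B * \<tau> * B * K * adj K) = K * (adj K * B * \<tau> * B * K) * adj K"
    by (rule assoc_mult_mat[OF K mult_carrier_mat[OF aKBtB K] aK, symmetric])
  finally show ?thesis .
qed

text \<open>With t = (c,x) and t' = (c',y), this M is the R-block (c,c') of V e_x e_y* V*.\<close>

lemma lin_cond_unital_on_R_factor_columns:
  assumes E: "CPTP (dR*dB) dB E" and dB: "0 < dB" and dA: "0 < dA" and V: "V \<in> carrier_mat (dR*dA) dA'"
    and test: "marg_uniform dA' dB dA (superch_ext dA' dA dB dR V E 1 dA (kron (unif dB)))"
    and t: "t < dA*dA'" and t': "t' < dA*dA'"
  defines "M \<equiv> mat dR dR (\<lambda>(i,j). R_factor dR dA dA' V $$ (i,t) * cnj (R_factor dR dA dA' V $$ (j,t')))"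
  shows "E (kron M (unif dB)) = mtrace M \<cdot>\<^sub>m unif dB"
proof -
  have dA': "0 < dA'" using t by (cases dA') auto
  have tt: "t div dA' < dA" "t' div dA' < dA" "t mod dA' < dA'" "t' mod dA' < dA'"
    using t t' less_mult_imp_div_less[of t dA dA'] less_mult_imp_div_less[of t' dA dA'] dA'
    by (auto simp: mult.commute)
  have X: "matrix_unit dA' (t mod dA') (t' mod dA') \<in> carrier_mat dA' dA'" by (simp add: matrix_unit_def)
  have "R_block dR dA (V * matrix_unit dA' (t mod dA') (t' mod dA') * adj V) (t div dA') (t' div dA') = M"
    using t t' tt block_index_less matrix_unit_congruence_entry[OF V tt(3) tt(4)]
    unfolding R_block_def M_def R_factor_def by (intro eq_matI) simp_all
  thus ?thesis using lin_cond_unital_on_R_blocks[OF E dB dA V test X tt(1) tt(2)] by simp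
qed

lemma lin_cond_unital_if_R_factor_invertible:
  assumes E: "CPTP (dR*dB) dB E" and dB: "0 < dB" and dA: "0 < dA" and V: "V \<in> carrier_mat (dR*dA) dA'"
    and test: "marg_uniform dA' dB dA (superch_ext dA' dA dB dR V E 1 dA (kron (unif dB)))"
    and B: "B \<in> carrier_mat dR dR" and inv1: "R_factor dR dA dA' V * adj (R_factor dR dA dA' V) * B = 1\<^sub>m dR"
    and inv2: "B * (R_factor dR dA dA' V * adj (R_factor dR dA dA' V)) = 1\<^sub>m dR"
  shows "lin_cond_unital dR dB E"
  unfolding lin_cond_unital_def
proof
  fix \<tau> :: "complex mat" assume \<tau>: "\<tau> \<in> carrier_mat dR dR"
  define K where "K = R_factor dR dA dA' V"
  define D where "D = dA*dA'"
  have K: "K \<in> carrier_mat dR D" unfolding K_def D_def by (rule R_factor_carrier)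
  define \<beta> where "\<beta> = adj K * B * \<tau> * B * K"
  have \<beta>: "\<beta> \<in> carrier_mat D D" unfolding \<beta>_def using K adj_carrier[OF K] B \<tau> by (meson mult_carrier_mat)
  define I where "I = {..<D} \<times> {..<D}"
  define M where "M x = mat dR dR (\<lambda>(i,j). K $$ (i, fst x) * cnj (K $$ (j, snd x)))" for x
  have fin: "finite I" and M: "\<forall>x\<in>I. M x \<in> carrier_mat dR dR" unfolding I_def M_def by simp_all
  have \<tau>_span: "\<tau> = mat dR dR (\<lambda>(i,j). \<Sum>x\<in>I. \<beta> $$ (fst x, snd x) * M x $$ (i,j))"
  proof (rule eq_matI)
    fix i j assume "i < dim_row (mat dR dR (\<lambda>(i,j). \<Sum>x\<in>I. \<beta> $$ (fst x, snd x) * M x $$ (i,j)))"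
      "j < dim_col (mat dR dR (\<lambda>(i,j). \<Sum>x\<in>I. \<beta> $$ (fst x, snd x) * M x $$ (i,j)))"
    hence i: "i < dR" and j: "j < dR" by auto
    have "\<tau> $$ (i,j) = (\<Sum>k<D. \<Sum>l<D. K $$ (i,k) * \<beta> $$ (k,l) * cnj (K $$ (j,l)))"
      unfolding \<beta>_def using gram_invertible_congruence[OF K B inv1[folded K_def] inv2[folded K_def] \<tau>]
        congruence_entry[OF K \<beta>[unfolded \<beta>_def] i j] by simp
    also have "\<dots> = (\<Sum>x\<in>I. \<beta> $$ (fst x, snd x) * M x $$ (i,j))"
      unfolding I_def M_def using i j by (simp add: sum.cartesian_product case_prod_beta mult.commute mult.left_commute)
    finally show "\<tau> $$ (i,j) = mat dR dR (\<lambda>(i,j). \<Sum>x\<in>I. \<beta> $$ (fst x, snd x) * M x $$ (i,j)) $$ (i,j)"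
      using i j by simp
  qed (use \<tau> in auto)
  have M_trace: "E (kron (M x) (unif dB)) = mtrace (M x) \<cdot>\<^sub>m unif dB" if "x \<in> I" for x
    using that lin_cond_unital_on_R_factor_columns[OF E dB dA V test]
    unfolding I_def D_def M_def K_def by (auto simp: case_prod_beta)
  have "E (kron \<tau> (unif dB)) = mat dB dB (\<lambda>(p,q). \<Sum>x\<in>I. \<beta> $$ (fst x, snd x) * E (kron (M x) (unif dB)) $$ (p,q))"
    by (subst \<tau>_span, rule linmap_matrix_sum[OF linmap_kron_unif[OF CPTP_linmap[OF E]] fin M])
  also have "\<dots> = mat dB dB (\<lambda>(p,q). \<Sum>x\<in>I. \<beta> $$ (fst x, snd x) * (mtrace (M x) \<cdot>\<^sub>m unif dB) $$ (p,q))"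
    using M_trace by simp
  also have "\<dots> = mtrace \<tau> \<cdot>\<^sub>m unif dB"
    by (subst \<tau>_span, rule linmap_matrix_sum[OF linmap_trace_unif fin M, symmetric])
  finally show "E (kron \<tau> (unif dB)) = mtrace \<tau> \<cdot>\<^sub>m unif dB" .
qed

lemma R_factor_kernel_orthogonal:
  assumes z: "z \<in> carrier_vec dR"
    and Kz: "(R_factor dR dA dA' V * adj (R_factor dR dA dA' V)) *\<^sub>v z = 0\<^sub>v dR"
    and c: "c < dA" and x: "x < dA'"
  shows "(\<Sum>a<dR. cnj (V $$ (a*dA + c, x)) * z $ a) = 0"
proof -
  define K where "K = R_factor dR dA dA' V"
  define D where "D = dA*dA'"
  have K: "K \<in> carrier_mat dR D" unfolding K_def D_def by (rule R_factor_carrier)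
  have aK: "adj K \<in> carrier_mat D dR" using adj_carrier[OF K] .
  define w where "w = adj K *\<^sub>v z"
  have w: "w \<in> carrier_vec D" unfolding w_def using aK z by simp
  have w_entry: "w $ t = (\<Sum>a<dR. cnj (K $$ (a,t)) * z $ a)" if t: "t < D" for t
    unfolding w_def using aK z t K by (simp add: scalar_prod_def lessThan_atLeast0 adj_def)
  have "K *\<^sub>v w = 0\<^sub>v dR" using Kz assoc_mult_mat_vec[OF K aK z] unfolding w_def K_def by simp
  hence "0 = (\<Sum>a<dR. cnj (z $ a) * (K *\<^sub>v w) $ a)" by simp
  also have "\<dots> = (\<Sum>a<dR. \<Sum>t<D. cnj (z $ a) * K $$ (a,t) * w $ t)"
    using K w by (simp add: scalar_prod_def lessThan_atLeast0 sum_distrib_left mult.assoc)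
  also have "\<dots> = (\<Sum>t<D. \<Sum>a<dR. cnj (z $ a) * K $$ (a,t) * w $ t)"
    by (rule sum.swap)
  also have "\<dots> = (\<Sum>t<D. w $ t * cnj (w $ t))"
    using w_entry by (intro sum.cong refl) (simp add: sum_distrib_right[symmetric] cnj_sum mult.commute)
  finally have "\<forall>t<D. w $ t = 0" using sum_cnj_mult_self_eq_0_iff[of "\<lambda>t. w $ t" D] by simp
  moreover have t: "c*dA' + x < D" unfolding D_def using block_index_less[OF c x] .
  moreover have "w $ (c*dA' + x) = (\<Sum>a<dR. cnj (V $$ (a*dA + c, x)) * z $ a)"
    unfolding w_entry[OF t] K_def R_factor_def using t x unfolding D_def by simp
  ultimately show ?thesis by simp
qed

lemma invertible_or_kernel:
  assumes A: "(A :: complex mat) \<in> carrier_mat n n"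
  shows "(\<exists>B. B \<in> carrier_mat n n \<and> A * B = 1\<^sub>m n \<and> B * A = 1\<^sub>m n) \<or> (\<exists>v. v \<in> carrier_vec n \<and> v \<noteq> 0\<^sub>v n \<and> A *\<^sub>v v = 0\<^sub>v n)"
proof (cases "det A = 0")
  case True
  thus ?thesis using det_0_iff_vec_prod_zero[OF A] by blast
next
  case False
  hence "A \<in> Units (ring_mat TYPE(complex) n ())" by (rule det_non_zero_imp_unit[OF A])
  thus ?thesis unfolding Units_def ring_mat_def by auto
qed

lemma unit_vector_real_at:
  assumes z: "z \<in> carrier_vec n" and nz: "z \<noteq> 0\<^sub>v n" and L: "L < n"
  shows "\<exists>\<theta> t. (\<Sum>a<n. (\<theta> * z $ a) * cnj (\<theta> * z $ a)) = 1 \<and> \<theta> * z $ L = of_real t \<and> t \<ge> 0"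
proof -
  define nr where "nr = (\<Sum>a<n. (cmod (z $ a))\<^sup>2)"
  obtain a0 where a0: "a0 < n" "z $ a0 \<noteq> 0" using z nz by (metis eq_vecI carrier_vecD index_zero_vec(1,2))
  have nr: "nr > 0" unfolding nr_def by (rule sum_pos2[of _ a0]) (use a0 in auto)
  have sq: "(complex_of_real (sqrt nr))\<^sup>2 = of_real nr" using nr by (metis of_real_power real_sqrt_pow2 less_imp_le)
  have zL: "cnj (z $ L) * z $ L = of_real ((cmod (z $ L))\<^sup>2)" by (metis complex_norm_square mult.commute)
  define ph where "ph = (if z $ L = 0 then 1 else cnj (z $ L) / of_real (cmod (z $ L)))"
  have ph1: "ph * cnj ph = 1" using zL unfolding ph_def by (simp add: power2_eq_square field_simps)
  define \<theta> where "\<theta> = ph / of_real (sqrt nr)"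
  have "(\<Sum>a<n. (\<theta> * z $ a) * cnj (\<theta> * z $ a)) = (\<theta> * cnj \<theta>) * (\<Sum>a<n. z $ a * cnj (z $ a))"
    by (simp add: sum_distrib_left mult.commute mult.left_commute)
  also have "(\<Sum>a<n. z $ a * cnj (z $ a)) = of_real nr"
    unfolding nr_def by (simp only: of_real_sum complex_norm_square)
  also have "\<theta> * cnj \<theta> = ph * cnj ph / of_real nr"
    unfolding \<theta>_def using nr sq by (simp add: power2_eq_square[symmetric] field_simps del: of_real_power)
  finally have "(\<Sum>a<n. (\<theta> * z $ a) * cnj (\<theta> * z $ a)) = 1" using ph1 nr by simp
  moreover have "\<theta> * z $ L = of_real (cmod (z $ L) / sqrt nr)"
    using zL nr unfolding \<theta>_def ph_def by (cases "z $ L = 0") (simp_all add: power2_eq_square field_simps)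
  ultimately show ?thesis using nr by (intro exI[of _ \<theta>] exI[of _ "cmod (z $ L) / sqrt nr"]) simp
qed

definition householder :: "complex \<Rightarrow> (nat \<Rightarrow> complex) \<Rightarrow> nat \<Rightarrow> nat \<Rightarrow> complex" where
  "householder c u i j = (if i = j then 1 else 0) - c * u i * cnj (u j)"

lemma householder_square:
  assumes nu: "c * c * (\<Sum>k<n. cnj (u k) * u k) = 2 * c" and i: "i < n" and j: "j < n"
  shows "(\<Sum>k<n. householder c u i k * householder c u k j) = (if i = j then 1 else 0)"
proof -
  have "householder c u i k * householder c u k j = (if k = i then if k = j then 1 else 0 else 0)
     - (if k = i then c * u k * cnj (u j) else 0) - (if k = j then c * u i * cnj (u k) else 0)
     + u i * cnj (u j) * (c * c * (cnj (u k) * u k))" for k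
    unfolding householder_def by (auto simp: algebra_simps)
  hence "(\<Sum>k<n. householder c u i k * householder c u k j)
      = (if i = j then 1 else 0) - c * u i * cnj (u j) - c * u i * cnj (u j)
        + u i * cnj (u j) * (c * c * (\<Sum>k<n. cnj (u k) * u k))"
    using i j by (simp add: sum.distrib sum_subtractf sum_distrib_left)
  thus ?thesis unfolding nu by (simp add: algebra_simps)
qed

text \<open>The witness is I - u u*/(1 + t) with u = zh + e_L.\<close>

lemma householder_reflection:
  fixes zh :: "nat \<Rightarrow> complex"
  assumes L: "L < n" and nrm: "(\<Sum>a<n. zh a * cnj (zh a)) = 1" and zL: "zh L = of_real t" and t: "t \<ge> 0"
  shows "\<exists>H. (\<forall>i j. cnj (H i j) = H j i) \<and> (\<forall>i<n. \<forall>j<n. (\<Sum>k<n. H i k * H k j) = (if i = j then 1 else 0))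
     \<and> (\<forall>i<n. H i L = - zh i)"
proof -
  define u where "u a = zh a + (if a = L then 1 else 0)" for a
  define c :: complex where "c = 1 / of_real (1 + t)"
  have "complex_of_real (1 + t) \<noteq> 0" using t by (simp only: of_real_eq_0_iff)
  hence c1: "c * of_real (1 + t) = 1" unfolding c_def by (simp del: of_real_add)
  have "cnj (u k) * u k = zh k * cnj (zh k) + (if k = L then cnj (zh k) + zh k + 1 else 0)" for k
    unfolding u_def by (auto simp: algebra_simps)
  hence "(\<Sum>k<n. cnj (u k) * u k) = 2 * of_real (1 + t)"
    using nrm L zL by (simp add: sum.distrib)
  hence "c * c * (\<Sum>k<n. cnj (u k) * u k) = 2 * c * (c * of_real (1 + t))" by (simp only: mult_ac)
  hence nu: "c * c * (\<Sum>k<n. cnj (u k) * u k) = 2 * c" by (simp only: c1 mult_1_right)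
  have "cnj (householder c u i j) = householder c u j i" for i j
    unfolding householder_def c_def by (simp add: mult.commute mult.left_commute)
  moreover have "householder c u i L = - zh i" for i
  proof -
    have "cnj (u L) = of_real (1 + t)" unfolding u_def zL by simp
    hence "householder c u i L = (if i = L then 1 else 0) - u i"
      unfolding householder_def using c1 by (simp add: mult.assoc)
    thus ?thesis unfolding u_def by simp
  qed
  ultimately show ?thesis using householder_square[OF nu] by blast
qed

text \<open>Dropping the last column of a Householder reflection that maps e_L to a multiple of z.\<close>

lemma isometry_onto_orthogonal_complement:
  assumes dR: "0 < dR" and z: "z \<in> carrier_vec dR" and nz: "z \<noteq> 0\<^sub>v dR"
  shows "\<exists>W. W \<in> carrier_mat dR (dR-1) \<and> adj W * W = 1\<^sub>m (dR-1) \<and>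
    (\<forall>y. (\<Sum>a<dR. cnj (z $ a) * y a) = 0 \<longrightarrow> (\<forall>a<dR. (\<Sum>a'<dR. (W * adj W) $$ (a,a') * y a') = y a))"
proof -
  define L where "L = dR - 1"
  have L: "L < dR" and dRL: "dR = Suc L" unfolding L_def using dR by auto
  obtain \<theta> t where n1: "(\<Sum>a<dR. (\<theta> * z $ a) * cnj (\<theta> * z $ a)) = 1" and zL: "\<theta> * z $ L = of_real t" and t: "t \<ge> 0"
    using unit_vector_real_at[OF z nz L] by blast
  define zh where "zh a = \<theta> * z $ a" for a
  obtain H where herm: "\<forall>i j. cnj (H i j) = H j i"
    and unit: "\<forall>i<dR. \<forall>j<dR. (\<Sum>k<dR. H i k * H k j) = (if i = j then 1 else 0)"
    and lastc: "\<forall>i<dR. H i L = - zh i"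
    using householder_reflection[of L dR zh t] L n1 zL t unfolding zh_def by blast
  define W where "W = mat dR L (\<lambda>(i,s). H i s)"
  have W: "W \<in> carrier_mat dR L" unfolding W_def by simp
  have W_entries: "adj W $$ (s,i) = H s i" "W $$ (i,s) = H i s" if "s < L" "i < dR" for s i
    using herm that L unfolding W_def adj_def by auto
  have iso: "adj W * W = 1\<^sub>m L"
  proof (rule eq_matI)
    fix s s' assume "s < dim_row (1\<^sub>m L :: complex mat)" "s' < dim_col (1\<^sub>m L :: complex mat)"
    hence s: "s < L" and s': "s' < L" by auto
    have "(adj W * W) $$ (s,s') = (\<Sum>i<dR. H s i * H i s')"
      using s s' W_entries by (simp add: mult_entry[OF adj_carrier[OF W] W s s'])
    thus "(adj W * W) $$ (s,s') = 1\<^sub>m L $$ (s,s')" using unit s s' L by simp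
  qed (use W in auto)
  have WW: "(W * adj W) $$ (a,a') = (if a = a' then 1 else 0) - zh a * cnj (zh a')"
    if a: "a < dR" and a': "a' < dR" for a a'
  proof -
    have "(W * adj W) $$ (a,a') = (\<Sum>s<L. H a s * H s a')"
      using a a' W_entries by (simp add: mult_entry[OF W adj_carrier[OF W] a a'])
    also have "\<dots> = (\<Sum>s<dR. H a s * H s a') - H a L * H L a'" unfolding dRL by simp
    also have "H L a' = - cnj (zh a')" using herm lastc a' by (metis complex_cnj_minus)
    finally show ?thesis using unit a a' lastc by simp
  qed
  have "(\<Sum>a'<dR. (W * adj W) $$ (a,a') * y a') = y a"
    if y: "(\<Sum>a<dR. cnj (z $ a) * y a) = 0" and a: "a < dR" for y a
  proof -
    have "(\<Sum>a'<dR. (W * adj W) $$ (a,a') * y a') = (\<Sum>a'<dR. (if a = a' then y a' else 0) - zh a * cnj \<theta> * (cnj (z $ a') * y a'))"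
      by (rule sum.cong[OF refl]) (auto simp: WW a zh_def algebra_simps)
    also have "\<dots> = y a - zh a * cnj \<theta> * (\<Sum>a'<dR. cnj (z $ a') * y a')"
      using a by (simp add: sum_subtractf sum_distrib_left)
    finally show ?thesis using y by simp
  qed
  thus ?thesis using W iso unfolding L_def by blast
qed

lemma congruence_mult:
  assumes J: "J \<in> carrier_mat n m" and V: "V \<in> carrier_mat m k" and X: "X \<in> carrier_mat k k"
  shows "(J * V) * X * adj (J * V) = J * (V * X * adj V) * adj J"
proof -
  have VX: "V * X \<in> carrier_mat m k" using V X by simp
  have "(J * V) * X * adj (J * V) = J * (V * X) * (adj V * adj J)"
    using adj_mult[OF J V] assoc_mult_mat[OF J V X] by simp
  also have "\<dots> = J * (V * X) * adj V * adj J"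
    by (rule assoc_mult_mat[OF mult_carrier_mat[OF J VX] adj_carrier[OF V] adj_carrier[OF J], symmetric])
  also have "J * (V * X) * adj V = J * (V * X * adj V)" by (rule assoc_mult_mat[OF J VX adj_carrier[OF V]])
  finally show ?thesis .
qed

text \<open>W W* acts as the identity on the R-part of V, which is orthogonal to z.\<close>

lemma kron_one_projection_fixes:
  assumes W: "W \<in> carrier_mat dR dS" and V: "V \<in> carrier_mat (dR*dA) dA'"
    and proj: "\<forall>y. (\<Sum>a<dR. cnj (z $ a) * y a) = 0 \<longrightarrow> (\<forall>a<dR. (\<Sum>a'<dR. (W * adj W) $$ (a,a') * y a') = y a)"
    and orth: "\<forall>c<dA. \<forall>x<dA'. (\<Sum>a<dR. cnj (V $$ (a*dA + c, x)) * z $ a) = 0"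
  shows "kron W (1\<^sub>m dA) * (adj (kron W (1\<^sub>m dA)) * V) = V"
proof (rule eq_matI)
  fix P x assume "P < dim_row V" "x < dim_col V"
  hence P: "P < dR*dA" and x: "x < dA'" using V by auto
  define a0 where "a0 = P div dA"
  define c where "c = P mod dA"
  have a0: "a0 < dR" and c: "c < dA"
    unfolding a0_def c_def using P less_mult_imp_div_less mod_less_of_less_mult by auto
  have V': "adj (kron W (1\<^sub>m dA)) * V \<in> carrier_mat (dS*dA) dA'"
    using adj_carrier[OF kron_carrier[OF W one_carrier_mat, of dA]] V by simp
  have V'_entry: "(adj (kron W (1\<^sub>m dA)) * V) $$ (s*dA + c, x) = (\<Sum>a<dR. cnj (W $$ (a, s)) * V $$ (a*dA + c, x))"
    if s: "s < dS" for s
    using kron_one_mult_entry[OF adj_carrier[OF W] V block_index_less[OF s c] x] W s c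
    unfolding adj_kron_one by (simp add: adj_entry)
  have "(kron W (1\<^sub>m dA) * (adj (kron W (1\<^sub>m dA)) * V)) $$ (P,x)
      = (\<Sum>s<dS. W $$ (a0, s) * (\<Sum>a<dR. cnj (W $$ (a, s)) * V $$ (a*dA + c, x)))"
    unfolding a0_def c_def kron_one_mult_entry[OF W V' P x] using V'_entry c_def by simp
  also have "\<dots> = (\<Sum>a<dR. (\<Sum>s<dS. W $$ (a0, s) * adj W $$ (s, a)) * V $$ (a*dA + c, x))"
    using W by (simp add: sum_distrib_left sum_distrib_right adj_entry mult.assoc, subst sum.swap, simp)
  also have "\<dots> = (\<Sum>a<dR. (W * adj W) $$ (a0, a) * V $$ (a*dA + c, x))"
    using W a0 by (intro sum.cong refl) (simp add: mult_entry[OF W adj_carrier[OF W]] del: index_mult_mat)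
  also have "\<dots> = V $$ (a0*dA + c, x)"
  proof -
    have "cnj (\<Sum>a<dR. cnj (V $$ (a*dA + c, x)) * z $ a) = 0" using orth c x by simp
    hence "(\<Sum>a<dR. cnj (z $ a) * V $$ (a*dA + c, x)) = 0" by (simp add: cnj_sum mult.commute)
    thus ?thesis using proj[rule_format, of "\<lambda>a. V $$ (a*dA + c, x)" a0] a0 by simp
  qed
  finally show "(kron W (1\<^sub>m dA) * (adj (kron W (1\<^sub>m dA)) * V)) $$ (P,x) = V $$ (P,x)"
    unfolding a0_def c_def by simp
qed (use V W in auto)

lemma superch_isometry_pullback:
  assumes N: "linmap dA dB N" and W: "W \<in> carrier_mat dR dS"
    and V: "V \<in> carrier_mat (dS*dA) dA'" and X: "X \<in> carrier_mat dA' dA'"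
  shows "superch dA dB dS V (\<lambda>Y. E (kron W (1\<^sub>m dB) * Y * adj (kron W (1\<^sub>m dB)))) N X
       = superch dA dB dR (kron W (1\<^sub>m dA) * V) E N X"
proof -
  have "kron W (1\<^sub>m dA) \<in> carrier_mat (dR*dA) (dS*dA)" using kron_carrier[OF W one_carrier_mat] .
  hence "kron W (1\<^sub>m dA) * V * X * adj (kron W (1\<^sub>m dA) * V)
       = kron W (1\<^sub>m dA) * (V * X * adj V) * adj (kron W (1\<^sub>m dA))"
    by (rule congruence_mult[OF _ V X])
  moreover have "V * X * adj V \<in> carrier_mat (dS*dA) (dS*dA)" using V X adj_carrier[OF V] by simp
  ultimately show ?thesis
    unfolding superch_def by (simp add: id_tensor_isometry_congruence[OF N W])
qed

lemma realization_compress: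
  assumes rea: "realization dA' dA dB dR V E" and dA': "0 < dA'"
    and z: "z \<in> carrier_vec dR" and nz: "z \<noteq> 0\<^sub>v dR"
    and orth: "\<forall>c<dA. \<forall>x<dA'. (\<Sum>a<dR. cnj (V $$ (a*dA + c, x)) * z $ a) = 0"
  shows "\<exists>V' E'. realization dA' dA dB (dR-1) V' E' \<and> (\<forall>N. CPTP dA dB N \<longrightarrow>
     (\<forall>X\<in>carrier_mat dA' dA'. superch dA dB (dR-1) V' E' N X = superch dA dB dR V E N X))"
proof -
  have dR: "0 < dR" and V: "V \<in> carrier_mat (dR*dA) dA'" and Viso: "adj V * V = 1\<^sub>m dA'"
    and E: "CPTP (dR*dB) dB E"
    using rea unfolding realization_def isometry_def by auto
  define dS where "dS = dR - 1"
  obtain W where W: "W \<in> carrier_mat dR dS" and Wiso: "adj W * W = 1\<^sub>m dS"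
    and proj: "\<forall>y. (\<Sum>a<dR. cnj (z $ a) * y a) = 0 \<longrightarrow> (\<forall>a<dR. (\<Sum>a'<dR. (W * adj W) $$ (a,a') * y a') = y a)"
    using isometry_onto_orthogonal_complement[OF dR z nz] unfolding dS_def by blast
  define JA where "JA = kron W (1\<^sub>m dA)"
  define JB where "JB = kron W (1\<^sub>m dB)"
  have JA: "JA \<in> carrier_mat (dR*dA) (dS*dA)" and JB: "JB \<in> carrier_mat (dR*dB) (dS*dB)"
    unfolding JA_def JB_def using kron_carrier[OF W one_carrier_mat] by auto
  define V' where "V' = adj JA * V"
  have V': "V' \<in> carrier_mat (dS*dA) dA'" unfolding V'_def using adj_carrier[OF JA] V by simp
  have JV': "JA * V' = V" unfolding JA_def V'_def by (rule kron_one_projection_fixes[OF W V proj orth])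
  have V'iso: "adj V' * V' = 1\<^sub>m dA'"
  proof -
    have "adj V' * V' = adj V * JA * V'" unfolding V'_def adj_mult[OF adj_carrier[OF JA] V] adj_adj ..
    also have "\<dots> = adj V * (JA * V')" using adj_carrier[OF V] JA V' by (rule assoc_mult_mat)
    finally show ?thesis using JV' Viso by simp
  qed
  have dS: "0 < dS"
  proof (rule ccontr)
    assume "\<not> 0 < dS"
    hence "(adj V' * V') $$ (0,0) = 0" using dA' V' by (simp add: mult_entry[OF adj_carrier[OF V'] V'] del: index_mult_mat)
    thus False using V'iso dA' by simp
  qed
  define E' where "E' = (\<lambda>Y. E (JB * Y * adj JB))"
  have "CPTP (dS*dB) dB E'"
    unfolding E'_def JB_def by (rule CPTP_isometry_precompose[OF _ isometry_kron_one[OF W Wiso] E]) (use JB in \<open>simp add: JB_def\<close>)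
  hence rea': "realization dA' dA dB dS V' E'" unfolding realization_def isometry_def using dS V' V'iso by simp
  have "superch dA dB dS V' E' N X = superch dA dB dR V E N X"
    if N: "CPTP dA dB N" and X: "X \<in> carrier_mat dA' dA'" for N X
    using superch_isometry_pullback[OF CPTP_linmap[OF N] W V' X] JV' unfolding E'_def JA_def JB_def by simp
  thus ?thesis using rea' unfolding dS_def by blast
qed

lemma marg_uniform_on_kron_unif_imp_cond_unital:
  assumes dA': "0 < dA'" and dA: "0 < dA" and dB: "0 < dB" and sf: "standard_form dA' dA dB dR V E"
    and test: "marg_uniform dA' dB dA (superch_ext dA' dA dB dR V E 1 dA (kron (unif dB)))"
  shows "cond_unital dR dB E"
proof -
  have rea: "realization dA' dA dB dR V E" using sf unfolding standard_form_def by blast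
  have dR: "0 < dR" and V: "V \<in> carrier_mat (dR*dA) dA'" and E: "CPTP (dR*dB) dB E"
    using rea unfolding realization_def isometry_def by auto
  define K where "K = R_factor dR dA dA' V"
  have "K * adj K \<in> carrier_mat dR dR" using R_factor_carrier adj_carrier unfolding K_def by (meson mult_carrier_mat)
  from invertible_or_kernel[OF this] show ?thesis
  proof (elim disjE exE conjE)
    fix B assume "B \<in> carrier_mat dR dR" "K * adj K * B = 1\<^sub>m dR" "B * (K * adj K) = 1\<^sub>m dR"
    hence "lin_cond_unital dR dB E"
      using lin_cond_unital_if_R_factor_invertible[OF E dB dA V test] unfolding K_def by blast
    thus ?thesis using cond_unital_iff_lin_cond_unital[OF CPTP_linmap[OF E]] by blast
  next
    fix z assume z: "z \<in> carrier_vec dR" and nz: "z \<noteq> 0\<^sub>v dR" and Kz: "K * adj K *\<^sub>v z = 0\<^sub>v dR"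
    have "\<forall>c<dA. \<forall>x<dA'. (\<Sum>a<dR. cnj (V $$ (a*dA + c, x)) * z $ a) = 0"
      using R_factor_kernel_orthogonal[OF z Kz[unfolded K_def]] by blast
    then obtain V' E' where "realization dA' dA dB (dR-1) V' E'" and "\<forall>N. CPTP dA dB N \<longrightarrow>
       (\<forall>X\<in>carrier_mat dA' dA'. superch dA dB (dR-1) V' E' N X = superch dA dB dR V E N X)"
      using realization_compress[OF rea dA' z nz] by blast
    hence "dR \<le> dR - 1" using sf unfolding standard_form_def by blast
    thus ?thesis using dR by simp
  qed
qed

theorem theorem11:
  fixes dA' dA dB dR :: nat and V :: "complex mat" and E :: "complex mat \<Rightarrow> complex mat"
  assumes "0 < dA'" and "0 < dA" and "0 < dB"
    and "standard_form dA' dA dB dR V E"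
  shows "(compl_unif_preserving dA' dA dB dR V E
            \<longleftrightarrow> marg_uniform dA' dB dA (superch_ext dA' dA dB dR V E 1 dA (\<lambda>X. kron (unif dB) X)))
       \<and> (marg_uniform dA' dB dA (superch_ext dA' dA dB dR V E 1 dA (\<lambda>X. kron (unif dB) X))
            \<longleftrightarrow> cond_unital dR dB E)"
proof -
  have E: "CPTP (dR*dB) dB E" using assms(4) unfolding standard_form_def realization_def by blast
  have "compl_unif_preserving dA' dA dB dR V E \<Longrightarrow> marg_uniform dA' dB dA (superch_ext dA' dA dB dR V E 1 dA (kron (unif dB)))"
    using compl_unif_preserving_imp_marg_uniform_on_kron_unif assms(2,3) by blast
  moreover have "marg_uniform dA' dB dA (superch_ext dA' dA dB dR V E 1 dA (kron (unif dB))) \<Longrightarrow> cond_unital dR dB E"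
    using marg_uniform_on_kron_unif_imp_cond_unital assms by blast
  moreover have "cond_unital dR dB E \<Longrightarrow> compl_unif_preserving dA' dA dB dR V E"
    using cond_unital_imp_compl_unif_preserving E assms(3) by blast
  ultimately show ?thesis by blast
qed

end
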